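(* Let $n\ge 4$. Consider the NSGA-II with population size $N\ge 4(n+1)$ (with $N$ even in the two-permutation case) optimizing \textsc{OneMinMax}, where the offspring population is generated by selecting $N$ parents via independent binary tournaments or via two-permutation binary tournaments and applying one-bit mutation or standard bit-wise mutation to each selected parent. Let $T$ be the number of iterations until $f(P_T)$ contains the whole Pareto front. Then $E[T]\le\frac{200e}{3}n(\ln n+1)$ (hence at most $\frac{200e}{3}Nn(\ln n+1)$ fitness evaluations, counting $N$ per iteration), and for every $\delta\ge 0$, $\Pr\!\left[T\ge\frac{200e}{3}(1+\delta)n\ln n\right]\le 2n^{-\delta}$.
   Context: Search space $\{0,1\}^n$; objective $f=(f_1,f_2):\{0,1\}^n\to\mathbb{R}^2$, both objectives maximized. $x$ strictly dominates $y$ if $f_1(x)\ge f_1(y)$, $f_2(x)\ge f_2(y)$ and at least one inequality is strict. Populations are multisets of bit strings; for a population $P$, $f(P)=\{f(x):x\in P\}$. Non-dominated sorting of a population $S$: $F_1$ is the set of individuals of $S$ not strictly dominated by any individual of $S$; inductively, $F_{k+1}$ is the set of individuals of $S\setminus(F_1\cup\dots\cup F_k)$ not strictly dominated by any individual of $S\setminus(F_1\cup\dots\cup F_k)$; the rank of $x$ in $S$ is the $k$ with $x\in F_k$. Crowding distance of the individuals of a set $S$ (computed with respect to $S$): start with $\mathrm{cDis}(x)=0$ for all $x\in S$; for each $i\in\{1,2\}$, sort $S$ in ascending $f_i$-value as $S_{i.1},\dots,S_{i.|S|}$ (ties broken arbitrarily), set $\mathrm{cDis}(S_{i.1})=\mathrm{cDis}(S_{i.|S|})=+\infty$,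 and for $2\le j\le |S|-1$ add $\frac{f_i(S_{i.j+1})-f_i(S_{i.j-1})}{f_i(S_{i.|S|})-f_i(S_{i.1})}$ to $\mathrm{cDis}(S_{i.j})$ (if $f_i$ is constant on $S$, these summands are taken to be $0$). The NSGA-II with population size $N$: $P_0$ consists of $N$ independent uniformly random bit strings; in iteration $t=0,1,2,\dots$ it generates an offspring population $Q_t$ of $N$ individuals, sets $R_t=P_t\cup Q_t$ (multiset union, $2N$ individuals), computes the fronts $F_1,F_2,\dots$ of $R_t$, lets $i^*$ be minimal with $\sum_{i\le i^*}|F_i|\ge N$, computes the crowding distance of each individual of $F_i$ ($i\le i^*$) with respect to $F_i$, and sets $P_{t+1}=F_1\cup\dots\cup F_{i^*-1}\cup\tilde F_{i^*}$, where $\tilde F_{i^*}$ consists of the $N-\sum_{i<i^*}|F_i|$ individuals of $F_{i^*}$ with largest crowding distance, ties broken uniformly at random. Parent selection: a binary tournament between two individuals of $P_t$ selects the one with smaller rank in $P_t$, or if ranks are equal the one with larger crowding distance (computed within its front of $P_t$), ties broken uniformly at random. Independent binary tournaments: $N$ times independently, two different individuals of $P_t$ are chosen uniformly at random and the tournament winner is a parent. Two-permutation binary tournaments ($N$ even): two independent uniformly random permutations $\pi_1,\pi_2$ of $P_t$; for each $j\in\{1,2\}$ and $i\in\{1,\dots,N/2\}$ the winner of the tournament between $\pi_j(2i-1)$ and $\pi_j(2i)$ is a parent. Each of the $N$ parents is mutated once to give $Q_t$. One-bit mutation flips exactly one uniformly random bit; standard bit-wise mutation flips each bit independently with probability $1/n$;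 all random choices are independent. \textsc{OneMinMax}: $f(x)=(n-\sum_{i=1}^n x_i,\ \sum_{i=1}^n x_i)$; its Pareto front is $\{(k,n-k):k\in\{0,\dots,n\}\}$. *)

theory Defs
  imports "HOL-Probability.Probability"
begin

type_synonym bits = "bool list"
type_synonym pop = "bool list list"

definition ones :: "bits \<Rightarrow> nat" where
  "ones x = length (filter id x)"

definition omm :: "nat \<Rightarrow> nat \<Rightarrow> bits \<Rightarrow> nat" where
  "omm n j x = (if j = 1 then n - ones x else ones x)"

definition fval :: "nat \<Rightarrow> bits \<Rightarrow> nat \<times> nat" where
  "fval n x = (omm n 1 x, omm n 2 x)"

definition sdom :: "nat \<Rightarrow> bits \<Rightarrow> bits \<Rightarrow> bool" where
  "sdom n x y \<longleftrightarrow> omm n 1 x \<ge> omm n 1 y \<and> omm n 2 x \<ge> omm n 2 y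
      \<and> (omm n 1 x > omm n 1 y \<or> omm n 2 x > omm n 2 y)"

definition pareto_front :: "nat \<Rightarrow> (nat \<times> nat) set" where
  "pareto_front n = {(k, n - k) | k. k \<le> n}"

definition covers_front :: "nat \<Rightarrow> pop \<Rightarrow> bool" where
  "covers_front n P \<longleftrightarrow> pareto_front n \<subseteq> fval n ` set P"

fun remaining :: "nat \<Rightarrow> pop \<Rightarrow> nat \<Rightarrow> nat set" where
  "remaining n R 0 = {..<length R}"
| "remaining n R (Suc k) = remaining n R k -
     {i \<in> remaining n R k. \<not> (\<exists>j\<in>remaining n R k. sdom n (R!j) (R!i))}"

text \<open>Front F_(k+1) (fronts are numbered from 1).\<close>
definition front :: "nat \<Rightarrow> pop \<Rightarrow> nat \<Rightarrow> nat set" where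
  "front n R k = {i \<in> remaining n R (k - 1). \<not> (\<exists>j\<in>remaining n R (k - 1). sdom n (R!j) (R!i))}"

definition rank :: "nat \<Rightarrow> pop \<Rightarrow> nat \<Rightarrow> nat" where
  "rank n R i = (LEAST k. k \<ge> 1 \<and> i \<in> front n R k)"

text \<open>Ties are broken arbitrarily, i.e. the theorem is quantified over all such rules.\<close>
definition valid_tb :: "nat \<Rightarrow> (pop \<Rightarrow> nat \<Rightarrow> nat set \<Rightarrow> nat list) \<Rightarrow> bool" where
  "valid_tb n tb \<longleftrightarrow> (\<forall>R j S. S \<subseteq> {..<length R} \<longrightarrow>
      distinct (tb R j S) \<and> set (tb R j S) = S \<and> sorted (map (\<lambda>i. omm n j (R!i)) (tb R j S)))"

definition cd_comp :: "nat \<Rightarrow> (pop \<Rightarrow> nat \<Rightarrow> nat set \<Rightarrow> nat list) \<Rightarrow> pop \<Rightarrow> nat set \<Rightarrow> nat \<Rightarrow> nat \<Rightarrow> ereal" where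
  "cd_comp n tb R S j i =
     (let L = tb R j S; m = length L; k = (THE k. k < m \<and> L ! k = i); v = (\<lambda>p. real (omm n j (R ! (L ! p))))
      in if k = 0 \<or> k = m - 1 then \<infinity>
         else if v (m - 1) = v 0 then 0
         else ereal ((v (k + 1) - v (k - 1)) / (v (m - 1) - v 0)))"

definition cdis :: "nat \<Rightarrow> (pop \<Rightarrow> nat \<Rightarrow> nat set \<Rightarrow> nat list) \<Rightarrow> pop \<Rightarrow> nat set \<Rightarrow> nat \<Rightarrow> ereal" where
  "cdis n tb R S i = cd_comp n tb R S 1 i + cd_comp n tb R S 2 i"

definition cdis_front :: "nat \<Rightarrow> (pop \<Rightarrow> nat \<Rightarrow> nat set \<Rightarrow> nat list) \<Rightarrow> pop \<Rightarrow> nat \<Rightarrow> ereal" where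
  "cdis_front n tb R i = cdis n tb R (front n R (rank n R i)) i"

definition istar :: "nat \<Rightarrow> pop \<Rightarrow> nat \<Rightarrow> nat" where
  "istar n R N = (LEAST k. card {i \<in> {..<length R}. rank n R i \<le> k} \<ge> N)"

definition survive :: "nat \<Rightarrow> (pop \<Rightarrow> nat \<Rightarrow> nat set \<Rightarrow> nat list) \<Rightarrow> nat \<Rightarrow> pop \<Rightarrow> pop pmf" where
  "survive n tb N R =
     (let ist = istar n R N;
          low = {i \<in> {..<length R}. rank n R i < ist};
          F = front n R ist;
          m = N - card low
      in map_pmf (\<lambda>A. map (\<lambda>i. R ! i) (sorted_list_of_set (low \<union> A)))
           (pmf_of_set {A. A \<subseteq> F \<and> card A = m \<and>
               (\<forall>a\<in>A. \<forall>b\<in>F - A. cdis n tb R F b \<le> cdis n tb R F a)}))"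

definition tourn :: "nat \<Rightarrow> (pop \<Rightarrow> nat \<Rightarrow> nat set \<Rightarrow> nat list) \<Rightarrow> pop \<Rightarrow> nat \<Rightarrow> nat \<Rightarrow> nat pmf" where
  "tourn n tb P a b =
     (if rank n P a < rank n P b then return_pmf a
      else if rank n P b < rank n P a then return_pmf b
      else if cdis_front n tb P a > cdis_front n tb P b then return_pmf a
      else if cdis_front n tb P b > cdis_front n tb P a then return_pmf b
      else pmf_of_set {a, b})"

datatype mutation = OneBit | Bitwise
datatype selection = Independent | TwoPerm

definition flip_bit :: "bits \<Rightarrow> nat \<Rightarrow> bits" where
  "flip_bit x i = x[i := \<not> x ! i]"

primrec bitwise_mut :: "nat \<Rightarrow> bits \<Rightarrow> bits pmf" where
  "bitwise_mut n [] = return_pmf []"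
| "bitwise_mut n (b # bs) =
     do { c \<leftarrow> bernoulli_pmf (1 / real n); r \<leftarrow> bitwise_mut n bs; return_pmf ((b \<noteq> c) # r) }"

definition mutate :: "mutation \<Rightarrow> nat \<Rightarrow> bits \<Rightarrow> bits pmf" where
  "mutate mu n x = (case mu of
      OneBit \<Rightarrow> map_pmf (flip_bit x) (pmf_of_set {..<n})
    | Bitwise \<Rightarrow> bitwise_mut n x)"

primrec seq_pmf :: "'a pmf list \<Rightarrow> 'a list pmf" where
  "seq_pmf [] = return_pmf []"
| "seq_pmf (p # ps) = do { x \<leftarrow> p; xs \<leftarrow> seq_pmf ps; return_pmf (x # xs) }"

definition offspring :: "selection \<Rightarrow> mutation \<Rightarrow> nat \<Rightarrow> (pop \<Rightarrow> nat \<Rightarrow> nat set \<Rightarrow> nat list) \<Rightarrow> nat \<Rightarrow> pop \<Rightarrow> pop pmf" where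
  "offspring sel mu n tb N P = (case sel of
      Independent \<Rightarrow>
        replicate_pmf N (do { ab \<leftarrow> pmf_of_set {(a, b). a < N \<and> b < N \<and> a \<noteq> b};
                              w \<leftarrow> tourn n tb P (fst ab) (snd ab);
                              mutate mu n (P ! w) })
    | TwoPerm \<Rightarrow>
        do { \<pi>1 \<leftarrow> pmf_of_set {xs. distinct xs \<and> set xs = {..<N}};
             \<pi>2 \<leftarrow> pmf_of_set {xs. distinct xs \<and> set xs = {..<N}};
             seq_pmf (map (\<lambda>(\<pi>, i). do { w \<leftarrow> tourn n tb P (\<pi> ! (2 * i)) (\<pi> ! (2 * i + 1));
                                         mutate mu n (P ! w) })
                         [(\<pi>, i). \<pi> \<leftarrow> [\<pi>1, \<pi>2], i \<leftarrow> [0..<N div 2]]) })"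

definition nsga_step :: "selection \<Rightarrow> mutation \<Rightarrow> nat \<Rightarrow> (pop \<Rightarrow> nat \<Rightarrow> nat set \<Rightarrow> nat list) \<Rightarrow> nat \<Rightarrow> pop \<Rightarrow> pop pmf" where
  "nsga_step sel mu n tb N P = do { Q \<leftarrow> offspring sel mu n tb N P; survive n tb N (P @ Q) }"

definition init_pop :: "nat \<Rightarrow> nat \<Rightarrow> pop pmf" where
  "init_pop n N = replicate_pmf N (pmf_of_set {x. length x = n})"

text \<open>Augmented chain: state (P_t, h_t) where h_t says whether one of P_0, ..., P_(t-1)
  already covers the Pareto front.\<close>
fun aug_state :: "selection \<Rightarrow> mutation \<Rightarrow> nat \<Rightarrow> (pop \<Rightarrow> nat \<Rightarrow> nat set \<Rightarrow> nat list) \<Rightarrow> nat \<Rightarrow> nat \<Rightarrow> (pop \<times> bool) pmf" where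
  "aug_state sel mu n tb N 0 = map_pmf (\<lambda>P. (P, False)) (init_pop n N)"
| "aug_state sel mu n tb N (Suc t) =
     do { (P, h) \<leftarrow> aug_state sel mu n tb N t;
          P' \<leftarrow> nsga_step sel mu n tb N P;
          return_pmf (P', h \<or> covers_front n P) }"

text \<open>Pr[T \<ge> t], where T = min {t. f(P_t) contains the Pareto front}.\<close>
definition prob_T_ge :: "selection \<Rightarrow> mutation \<Rightarrow> nat \<Rightarrow> (pop \<Rightarrow> nat \<Rightarrow> nat set \<Rightarrow> nat list) \<Rightarrow> nat \<Rightarrow> nat \<Rightarrow> real" where
  "prob_T_ge sel mu n tb N t = measure_pmf.prob (aug_state sel mu n tb N t) {s. \<not> snd s}"

text \<open>E[T] = sum over t \<ge> 1 of Pr[T \<ge> t] (in [0, \<infinity>]).\<close>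
definition expected_T :: "selection \<Rightarrow> mutation \<Rightarrow> nat \<Rightarrow> (pop \<Rightarrow> nat \<Rightarrow> nat set \<Rightarrow> nat list) \<Rightarrow> nat \<Rightarrow> ennreal" where
  "expected_T sel mu n tb N = (\<Sum>t. ennreal (prob_T_ge sel mu n tb N (Suc t)))"

end

theory Submission
  imports Defs "HOL-Combinatorics.Transposition"
begin

text \<open>On OneMinMax every individual is Pareto optimal, so the combined population is a single
  front and survival keeps the \<open>N\<close> individuals of largest crowding distance. Per objective, only
  the two ends of each run of equal values get positive crowding distance, so at most
  \<open>4 (n + 1) \<le> N\<close> individuals do, and every present number of ones has such a representative:
  a value, once found, is never lost.

  Let \<open>X\<close> be the number of missing values. If \<open>u\<close> is missing and \<open>u - 1\<close> (or \<open>u + 1\<close>) is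
  present, some individual with that value has sorted neighbours at distance \<open>\<ge> 2\<close>, hence crowding
  distance \<open>\<ge> 2 / D\<close> for the range \<open>D \<le> n\<close>; as all crowding distances sum to at most \<open>4 D\<close>, at
  most \<open>2 n + 3\<close> others are as large, it wins its tournament with probability \<open>\<ge> 3/8\<close>, and some
  offspring is a mutant of it with probability \<open>\<ge> 1/4\<close>. Mutation then creates \<open>u\<close> with
  probability \<open>\<ge> k / (e n)\<close>, where \<open>k\<close> counts the suitable bits, and \<open>u\<close> can be chosen with
  \<open>6 k \<ge> X\<close>. So \<open>E[X'] \<le> (1 - 1 / (24 e n)) X\<close>; since \<open>X\<^sub>0 \<le> n\<close> and \<open>X \<ge> 1\<close> until the front is
  covered, \<open>Pr[T > t] \<le> n (1 - 1 / (24 e n))\<^sup>t\<close>, which yields both bounds.\<close>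

section \<open>Crowding distance along a sorted sequence\<close>

lemma mono_on_lessThanD:
  fixes p q m :: nat
  assumes "mono_on {..<m} v" "p \<le> q" "q < m"
  shows "v p \<le> v q"
  using assms(2,3) by (intro mono_onD[OF assms(1)]) auto

text \<open>One objective's summand in \<open>cd_comp\<close>, for the individual at position \<open>k\<close> of a list of \<open>m\<close>
  individuals sorted by that objective, with objective values \<open>v 0 \<le> \<dots> \<le> v (m - 1)\<close>.\<close>
definition crowding_contrib :: "(nat \<Rightarrow> real) \<Rightarrow> nat \<Rightarrow> nat \<Rightarrow> ereal" where
  "crowding_contrib v m k = (if k = 0 \<or> k = m - 1 then \<infinity> else if v (m-1) = v 0 then 0
      else ereal ((v (k+1) - v (k-1)) / (v (m-1) - v 0)))"

definition run_starts :: "(nat \<Rightarrow> real) \<Rightarrow> nat \<Rightarrow> nat set" where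
  "run_starts v m = {k. k < m \<and> (k = 0 \<or> v (k-1) < v k)}"

definition run_ends :: "(nat \<Rightarrow> real) \<Rightarrow> nat \<Rightarrow> nat set" where
  "run_ends v m = {k. k < m \<and> (k = m - 1 \<or> v k < v (k+1))}"

lemma crowding_contrib_nonneg:
  assumes mono: "mono_on {..<m} v" and "k < m"
  shows "crowding_contrib v m k \<ge> 0"
proof -
  { assume h: "k \<noteq> 0" "k \<noteq> m - 1" "v (m-1) \<noteq> v 0"
    have "v (k-1) \<le> v (k+1)" using h assms by (intro mono_on_lessThanD[OF mono]) auto
    moreover have "v 0 \<le> v (m-1)" using h assms by (intro mono_on_lessThanD[OF mono]) auto
    ultimately have "(v (k+1) - v (k-1)) / (v (m-1) - v 0) \<ge> 0" by simp }
  thus ?thesis unfolding crowding_contrib_def by auto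
qed

lemma crowding_contrib_eq_infinity_imp: "crowding_contrib v m k = \<infinity> \<Longrightarrow> k = 0 \<or> k = m - 1"
  unfolding crowding_contrib_def by (auto split: if_splits)

lemma crowding_contrib_pos_imp_run_boundary:
  assumes mono: "mono_on {..<m} v" and "k < m" "crowding_contrib v m k > 0"
  shows "k \<in> run_starts v m \<union> run_ends v m"
proof (rule ccontr)
  assume "k \<notin> run_starts v m \<union> run_ends v m"
  hence h: "k \<noteq> 0" "k \<noteq> m-1" "v (k-1) \<ge> v k" "v k \<ge> v (k+1)"
    using assms(2) unfolding run_starts_def run_ends_def by auto
  have "v (k-1) \<le> v k" using h assms by (intro mono_on_lessThanD[OF mono]) auto
  moreover have "v k \<le> v (k+1)" using h assms by (intro mono_on_lessThanD[OF mono]) auto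
  ultimately have "v (k+1) = v (k-1)" using h by simp
  hence "crowding_contrib v m k = 0" using h unfolding crowding_contrib_def by auto
  thus False using assms by simp
qed

lemma inj_on_run_starts:
  assumes mono: "mono_on {..<m} v"
  shows "inj_on v (run_starts v m)"
proof -
  let ?A = "run_starts v m"
  have lt: "v p < v q" if "p \<in> ?A" "q \<in> ?A" "p < q" for p q
  proof -
    have "v p \<le> v (q-1)" using that by (intro mono_on_lessThanD[OF mono]) (auto simp: run_starts_def)
    also have "v (q-1) < v q" using that by (auto simp: run_starts_def)
    finally show ?thesis .
  qed
  show ?thesis
  proof (rule inj_onI, rule ccontr)
    fix p q assume "p \<in> ?A" "q \<in> ?A" "v p = v q" "p \<noteq> q"
    thus False using lt[of p q] lt[of q p] by (cases "p < q") auto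
  qed
qed

lemma inj_on_run_ends:
  assumes mono: "mono_on {..<m} v"
  shows "inj_on v (run_ends v m)"
proof -
  let ?A = "run_ends v m"
  have lt: "v p < v q" if "p \<in> ?A" "q \<in> ?A" "p < q" for p q
  proof -
    have "v p < v (p+1)" using that by (auto simp: run_ends_def)
    also have "v (p+1) \<le> v q" using that by (intro mono_on_lessThanD[OF mono]) (auto simp: run_ends_def)
    finally show ?thesis .
  qed
  show ?thesis
  proof (rule inj_onI, rule ccontr)
    fix p q assume "p \<in> ?A" "q \<in> ?A" "v p = v q" "p \<noteq> q"
    thus False using lt[of p q] lt[of q p] by (cases "p < q") auto
  qed
qed

text \<open>A run of equal values contributes positive crowding distance only at its two ends, so
  at most two positions per attained value do.\<close>
lemma card_crowding_contrib_pos_le: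
  assumes mono: "mono_on {..<m} v" and "v ` {..<m} \<subseteq> W" "finite W"
  shows "card {k. k < m \<and> crowding_contrib v m k > 0} \<le> 2 * card W"
proof -
  have card_le: "card A \<le> card W" if "inj_on v A" "A \<subseteq> {..<m}" for A
  proof -
    have "card A = card (v ` A)" using that by (simp add: card_image)
    also have "\<dots> \<le> card W" using that assms by (intro card_mono) auto
    finally show ?thesis .
  qed
  have "card {k. k < m \<and> crowding_contrib v m k > 0} \<le> card (run_starts v m \<union> run_ends v m)"
    using crowding_contrib_pos_imp_run_boundary[OF assms(1)]
    by (intro card_mono) (auto simp: run_starts_def run_ends_def)
  also have "\<dots> \<le> card (run_starts v m) + card (run_ends v m)" by (rule card_Un_le)
  also have "\<dots> \<le> card W + card W"
    using card_le[OF inj_on_run_starts[OF assms(1)]] card_le[OF inj_on_run_ends[OF assms(1)]]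
    by (auto simp: run_starts_def run_ends_def intro: add_mono)
  finally show ?thesis by simp
qed

lemma crowding_contrib_run_start_pos:
  assumes mono: "mono_on {..<m} v" and "p \<in> run_starts v m"
  shows "crowding_contrib v m p > 0"
proof (cases "p = 0 \<or> p = m - 1")
  case True thus ?thesis by (simp add: crowding_contrib_def)
next
  case False
  hence h: "p \<noteq> 0" "p \<noteq> m-1" "v (p-1) < v p" "p < m" using assms by (auto simp: run_starts_def)
  have "v p \<le> v (p+1)" "v 0 \<le> v (p-1)" "v p \<le> v (m-1)"
    using h assms by (auto intro: mono_on_lessThanD[OF mono])
  hence "v (p+1) - v (p-1) > 0" "v (m-1) - v 0 > 0" using h by auto
  thus ?thesis using h unfolding crowding_contrib_def by (auto simp: field_simps)
qed

lemma run_start_exists: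
  assumes mono: "mono_on {..<m} v" and "k < m"
  shows "\<exists>p \<in> run_starts v m. v p = v k"
proof -
  define p where "p = (LEAST p. v p = v k)"
  have vp: "v p = v k" unfolding p_def by (rule LeastI) simp
  have pk: "p \<le> k" unfolding p_def by (rule Least_le) simp
  have "p = 0 \<or> v (p-1) < v p"
  proof (cases "p = 0")
    case False
    have "v (p-1) \<noteq> v k"
    proof
      assume "v (p-1) = v k"
      hence "p \<le> p - 1" unfolding p_def by (rule Least_le)
      thus False using False by simp
    qed
    moreover have "v (p-1) \<le> v p" using pk assms False by (intro mono_on_lessThanD[OF mono]) auto
    ultimately show ?thesis using vp by auto
  qed simp
  hence "p \<in> run_starts v m" using pk assms(2) by (simp add: run_starts_def)
  with vp show ?thesis by blast
qed

lemma run_end_exists: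
  assumes mono: "mono_on {..<m} v" and "k < m"
  shows "\<exists>p \<in> run_ends v m. v p = v k"
proof -
  define p where "p = (GREATEST p. p < m \<and> v p = v k)"
  have le_p: "y \<le> p" if "y < m" "v y = v k" for y
    unfolding p_def by (rule Greatest_le_nat[where b=m]) (use that in auto)
  have pp: "p < m \<and> v p = v k" unfolding p_def
    by (rule GreatestI_nat[where b=m]) (use assms in auto)
  have "p = m - 1 \<or> v p < v (p+1)"
  proof (cases "p = m - 1")
    case False
    hence p1: "p + 1 < m" using pp by auto
    have "v (p+1) \<noteq> v k" using le_p[of "p+1"] p1 by auto
    moreover have "v p \<le> v (p+1)" using p1 assms by (intro mono_on_lessThanD[OF mono]) auto
    ultimately show ?thesis using pp by auto
  qed simp
  thus ?thesis using pp unfolding run_ends_def by auto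
qed

lemma crowding_contrib_ge_gap:
  assumes mono: "mono_on {..<m} v" and "p < m" "p = 0 \<or> p = m - 1 \<or> v (p+1) - v (p-1) \<ge> 2"
  shows "crowding_contrib v m p = \<infinity> \<or>
    (v (m-1) - v 0 > 0 \<and> crowding_contrib v m p \<ge> ereal (2 / (v (m-1) - v 0)))"
proof (cases "p = 0 \<or> p = m - 1")
  case True thus ?thesis by (simp add: crowding_contrib_def)
next
  case False
  hence h: "p \<noteq> 0" "p \<noteq> m - 1" "v (p+1) - v (p-1) \<ge> 2" using assms by auto
  have "v (p+1) \<le> v (m-1)" "v 0 \<le> v (p-1)" using h assms by (auto intro: mono_on_lessThanD[OF mono])
  hence D: "v (m-1) - v 0 \<ge> v (p+1) - v (p-1)" by simp
  hence Dp: "v (m-1) - v 0 > 0" using h by simp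
  have "2 / (v (m-1) - v 0) \<le> (v (p+1) - v (p-1)) / (v (m-1) - v 0)"
    using Dp h by (intro divide_right_mono) auto
  thus ?thesis using h Dp unfolding crowding_contrib_def by auto
qed

text \<open>The sum of the interior spreads \<open>v (k + 1) - v (k - 1)\<close> telescopes into two copies of the
  total range.\<close>
lemma sum_interior_spreads_le:
  fixes v :: "nat \<Rightarrow> real"
  assumes mono: "mono_on {..<m} v" and "m \<ge> 2"
  shows "(\<Sum>k\<in>{1..<m-1}. v (k+1) - v (k-1)) \<le> 2 * (v (m-1) - v 0)"
proof -
  have "(\<Sum>k\<in>{1..<m-1}. v (k+1) - v (k-1))
      = (\<Sum>k\<in>{1..<m-1}. v (Suc k) - v k) + (\<Sum>k\<in>{1..<m-1}. v k - v (k-1))"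
    by (simp add: sum.distrib[symmetric])
  also have "(\<Sum>k\<in>{1..<m-1}. v (Suc k) - v k) = v (m-1) - v 1"
  proof -
    have "(\<Sum>k\<in>{1..<m-1}. v (Suc k) - v k) = (\<Sum>k = 1..m-2. v (Suc k) - v k)"
      using assms by (intro sum.cong) auto
    also have "\<dots> = v (Suc (m-2)) - v 1" using assms by (intro sum_Suc_diff) auto
    finally show ?thesis using assms by (simp add: Suc_diff_Suc numeral_2_eq_2)
  qed
  also have "(\<Sum>k\<in>{1..<m-1}. v k - v (k-1)) = (\<Sum>k\<in>{0..<m-2}. v (Suc k) - v k)"
  proof -
    have "(\<Sum>k\<in>{1..<m-1}. v k - v (k-1)) = (\<Sum>k\<in>Suc ` {0..<m-2}. v k - v (k-1))"
      using assms by (intro sum.cong) (auto simp: image_Suc_atLeastLessThan)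
    also have "\<dots> = (\<Sum>k\<in>{0..<m-2}. v (Suc k) - v k)" by (subst sum.reindex) auto
    finally show ?thesis .
  qed
  also have "\<dots> = v (m-2) - v 0"
    using sum_lessThan_telescope[of v "m-2"] by (simp add: atLeast0LessThan)
  finally have eq: "(\<Sum>k\<in>{1..<m-1}. v (k+1) - v (k-1)) = v (m-1) - v 1 + (v (m-2) - v 0)" .
  have "v 0 \<le> v 1" "v (m-2) \<le> v (m-1)"
    using assms by (auto intro: mono_on_lessThanD[OF mono])
  thus ?thesis unfolding eq by argo
qed

section \<open>Crowding distance in a population forming a single front\<close>

type_synonym tiebreak = "pop \<Rightarrow> nat \<Rightarrow> nat set \<Rightarrow> nat list"

abbreviation pop_cd_comp :: "nat \<Rightarrow> tiebreak \<Rightarrow> pop \<Rightarrow> nat \<Rightarrow> nat \<Rightarrow> ereal" where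
  "pop_cd_comp n tb R j \<equiv> cd_comp n tb R {..<length R} j"

abbreviation pop_cdis :: "nat \<Rightarrow> tiebreak \<Rightarrow> pop \<Rightarrow> nat \<Rightarrow> ereal" where
  "pop_cdis n tb R \<equiv> cdis n tb R {..<length R}"

definition pop_of_length :: "nat \<Rightarrow> pop \<Rightarrow> bool" where
  "pop_of_length n R \<longleftrightarrow> (\<forall>x\<in>set R. length x = n)"

definition sorted_order :: "tiebreak \<Rightarrow> pop \<Rightarrow> nat \<Rightarrow> nat list" where
  "sorted_order tb R j = tb R j {..<length R}"

definition sorted_value :: "nat \<Rightarrow> tiebreak \<Rightarrow> pop \<Rightarrow> nat \<Rightarrow> nat \<Rightarrow> real" where
  "sorted_value n tb R j p = real (omm n j (R ! (sorted_order tb R j ! p)))"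

definition sorted_pos :: "tiebreak \<Rightarrow> pop \<Rightarrow> nat \<Rightarrow> nat \<Rightarrow> nat" where
  "sorted_pos tb R j y = (THE k. k < length (sorted_order tb R j) \<and> sorted_order tb R j ! k = y)"

abbreviation sorted_range :: "nat \<Rightarrow> tiebreak \<Rightarrow> pop \<Rightarrow> nat \<Rightarrow> real" where
  "sorted_range n tb R j \<equiv> sorted_value n tb R j (length R - 1) - sorted_value n tb R j 0"

lemma ones_le_length: "ones x \<le> length x"
  unfolding ones_def by (rule length_filter_le)

lemma omm_1: "omm n 1 x = n - ones x" and omm_2: "omm n 2 x = ones x"
  by (simp_all add: omm_def)

lemma pop_of_length_ones_le: "pop_of_length n R \<Longrightarrow> y < length R \<Longrightarrow> ones (R ! y) \<le> n"
  unfolding pop_of_length_def by (metis nth_mem ones_le_length)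

lemma sorted_order:
  assumes "valid_tb n tb"
  shows "distinct (sorted_order tb R j)" "set (sorted_order tb R j) = {..<length R}"
    "length (sorted_order tb R j) = length R"
    "sorted (map (\<lambda>i. omm n j (R!i)) (sorted_order tb R j))"
proof -
  have h: "distinct (sorted_order tb R j) \<and> set (sorted_order tb R j) = {..<length R}
      \<and> sorted (map (\<lambda>i. omm n j (R!i)) (sorted_order tb R j))"
    using assms unfolding valid_tb_def sorted_order_def by blast
  thus "distinct (sorted_order tb R j)" "set (sorted_order tb R j) = {..<length R}"
    "sorted (map (\<lambda>i. omm n j (R!i)) (sorted_order tb R j))"
    by auto
  show "length (sorted_order tb R j) = length R" using h distinct_card[of "sorted_order tb R j"] by simp
qed

lemma sorted_order_nth_less:
  assumes "valid_tb n tb" "k < length R"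
  shows "sorted_order tb R j ! k < length R"
  using nth_mem[of k "sorted_order tb R j"] sorted_order[OF assms(1), where R = R and j = j] assms(2) by auto

lemma mono_on_sorted_value:
  assumes "valid_tb n tb"
  shows "mono_on {..<length R} (sorted_value n tb R j)"
proof (rule mono_onI)
  fix p q assume pq: "p \<in> {..<length R}" "q \<in> {..<length R}" "p \<le> q"
  have "map (\<lambda>i. omm n j (R!i)) (sorted_order tb R j) ! p \<le> map (\<lambda>i. omm n j (R!i)) (sorted_order tb R j) ! q"
    using sorted_order[OF assms, where R = R and j = j] pq by (intro sorted_nth_mono) auto
  thus "sorted_value n tb R j p \<le> sorted_value n tb R j q"
    using pq sorted_order(3)[OF assms, where R = R and j = j] by (simp add: sorted_value_def)
qed

lemma sorted_pos:
  assumes "valid_tb n tb" "y < length R"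
  shows "sorted_pos tb R j y < length R" "sorted_order tb R j ! sorted_pos tb R j y = y"
proof -
  note L = sorted_order[OF assms(1), where R = R and j = j]
  obtain k where k: "k < length (sorted_order tb R j)" "sorted_order tb R j ! k = y"
    using L(2) assms(2) by (metis in_set_conv_nth lessThan_iff)
  have "sorted_pos tb R j y = k" unfolding sorted_pos_def
    by (rule the_equality) (use k L(1) nth_eq_iff_index_eq in metis)+
  thus "sorted_pos tb R j y < length R" "sorted_order tb R j ! sorted_pos tb R j y = y"
    using k L(3) by auto
qed

lemma sorted_pos_nth:
  assumes "valid_tb n tb" "k < length R"
  shows "sorted_pos tb R j (sorted_order tb R j ! k) = k"
  unfolding sorted_pos_def
  by (rule the_equality) (use assms sorted_order(1,3)[OF assms(1), where R = R and j = j] in \<open>auto simp: nth_eq_iff_index_eq\<close>)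

lemma sorted_value_sorted_pos:
  assumes "valid_tb n tb" "y < length R"
  shows "sorted_value n tb R j (sorted_pos tb R j y) = real (omm n j (R!y))"
  using sorted_pos(2)[OF assms] unfolding sorted_value_def by simp

lemma sorted_value_le:
  assumes "valid_tb n tb" "pop_of_length n R" "p < length R"
  shows "sorted_value n tb R j p \<le> n"
  using pop_of_length_ones_le[OF assms(2) sorted_order_nth_less[OF assms(1,3)]]
  unfolding sorted_value_def omm_def by auto

lemma pop_cd_comp_eq_crowding_contrib:
  assumes "valid_tb n tb" "y < length R"
  shows "pop_cd_comp n tb R j y = crowding_contrib (sorted_value n tb R j) (length R) (sorted_pos tb R j y)"
  using sorted_order(3)[OF assms(1), where R = R and j = j]
  unfolding cd_comp_def crowding_contrib_def Let_def sorted_value_def sorted_pos_def sorted_order_def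
  by simp

lemma pop_cd_comp_nonneg:
  assumes "valid_tb n tb" "y < length R"
  shows "pop_cd_comp n tb R j y \<ge> 0"
  using pop_cd_comp_eq_crowding_contrib[OF assms]
    crowding_contrib_nonneg[OF mono_on_sorted_value[OF assms(1)] sorted_pos(1)[OF assms]]
  by simp

lemma card_pop_cd_comp_le:
  assumes "valid_tb n tb"
  shows "card {y. y < length R \<and> Q (pop_cd_comp n tb R j y)}
    \<le> card {k. k < length R \<and> Q (crowding_contrib (sorted_value n tb R j) (length R) k)}"
proof -
  let ?K = "{k. k < length R \<and> Q (crowding_contrib (sorted_value n tb R j) (length R) k)}"
  have "{y. y < length R \<and> Q (pop_cd_comp n tb R j y)} \<subseteq> (\<lambda>k. sorted_order tb R j ! k) ` ?K"
  proof
    fix y assume y: "y \<in> {y. y < length R \<and> Q (pop_cd_comp n tb R j y)}"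
    hence "sorted_pos tb R j y \<in> ?K"
      using pop_cd_comp_eq_crowding_contrib[OF assms, of y R j] sorted_pos[OF assms, of y R j] by auto
    hence "sorted_order tb R j ! sorted_pos tb R j y \<in> (\<lambda>k. sorted_order tb R j ! k) ` ?K"
      by (rule imageI)
    thus "y \<in> (\<lambda>k. sorted_order tb R j ! k) ` ?K"
      using sorted_pos(2)[OF assms, of y R j] y by simp
  qed
  hence "card {y. y < length R \<and> Q (pop_cd_comp n tb R j y)} \<le> card ((\<lambda>k. sorted_order tb R j ! k) ` ?K)"
    by (intro card_mono) auto
  also have "\<dots> \<le> card ?K" by (rule card_image_le) simp
  finally show ?thesis .
qed

lemma card_pop_cd_comp_pos_le:
  assumes "valid_tb n tb" "pop_of_length n R"
  shows "card {y. y < length R \<and> pop_cd_comp n tb R j y > 0} \<le> 2 * (n + 1)"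
proof -
  have "card {y. y < length R \<and> pop_cd_comp n tb R j y > 0}
      \<le> card {k. k < length R \<and> crowding_contrib (sorted_value n tb R j) (length R) k > 0}"
    by (rule card_pop_cd_comp_le[OF assms(1)])
  also have "\<dots> \<le> 2 * card (real ` {0..n})"
    using sorted_value_le[OF assms] sorted_value_def
    by (intro card_crowding_contrib_pos_le[OF mono_on_sorted_value[OF assms(1)]]) auto
  also have "\<dots> \<le> 2 * (n + 1)" using card_image_le[of "{0..n}" real] by simp
  finally show ?thesis .
qed

lemma card_pop_cd_comp_infinite_le:
  assumes "valid_tb n tb"
  shows "card {y. y < length R \<and> pop_cd_comp n tb R j y = \<infinity>} \<le> 2"
proof -
  have "card {y. y < length R \<and> pop_cd_comp n tb R j y = \<infinity>}
      \<le> card {k. k < length R \<and> crowding_contrib (sorted_value n tb R j) (length R) k = \<infinity>}"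
    by (rule card_pop_cd_comp_le[OF assms])
  also have "\<dots> \<le> card {0, length R - 1}"
    using crowding_contrib_eq_infinity_imp by (intro card_mono) auto
  also have "\<dots> \<le> 2" by (simp add: card_insert_le_m1)
  finally show ?thesis .
qed

lemma card_pop_cdis_le_components:
  assumes "valid_tb n tb"
    and Q: "\<And>a b :: ereal. a \<ge> 0 \<Longrightarrow> b \<ge> 0 \<Longrightarrow> Q (a + b) \<Longrightarrow> Q a \<or> Q b"
  shows "card {y. y < length R \<and> Q (pop_cdis n tb R y)}
    \<le> card {y. y < length R \<and> Q (pop_cd_comp n tb R 1 y)} + card {y. y < length R \<and> Q (pop_cd_comp n tb R 2 y)}"
proof -
  have "{y. y < length R \<and> Q (pop_cdis n tb R y)}
      \<subseteq> {y. y < length R \<and> Q (pop_cd_comp n tb R 1 y)} \<union> {y. y < length R \<and> Q (pop_cd_comp n tb R 2 y)}"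
    using Q pop_cd_comp_nonneg[OF assms(1)] unfolding cdis_def by blast
  hence "card {y. y < length R \<and> Q (pop_cdis n tb R y)}
      \<le> card ({y. y < length R \<and> Q (pop_cd_comp n tb R 1 y)} \<union> {y. y < length R \<and> Q (pop_cd_comp n tb R 2 y)})"
    by (intro card_mono) auto
  thus ?thesis using card_Un_le order_trans by blast
qed

lemma card_pop_cdis_pos_le:
  assumes "valid_tb n tb" "pop_of_length n R"
  shows "card {y. y < length R \<and> pop_cdis n tb R y > 0} \<le> 4 * (n + 1)"
proof -
  have "\<And>a b :: ereal. a \<ge> 0 \<Longrightarrow> b \<ge> 0 \<Longrightarrow> a + b > 0 \<Longrightarrow> a > 0 \<or> b > 0"
    by (metis add.right_neutral add_0 order_less_le)
  from card_pop_cdis_le_components[where Q = "\<lambda>c. c > 0" and R = R, OF assms(1) this]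
  show ?thesis using card_pop_cd_comp_pos_le[OF assms, of 1] card_pop_cd_comp_pos_le[OF assms, of 2]
    by linarith
qed

lemma card_pop_cdis_infinite_le:
  assumes "valid_tb n tb"
  shows "card {y. y < length R \<and> pop_cdis n tb R y = \<infinity>} \<le> 4"
proof -
  have "\<And>a b :: ereal. a \<ge> 0 \<Longrightarrow> b \<ge> 0 \<Longrightarrow> a + b = \<infinity> \<Longrightarrow> a = \<infinity> \<or> b = \<infinity>"
    by (case_tac a; case_tac b) auto
  from card_pop_cdis_le_components[where Q = "\<lambda>c. c = \<infinity>" and R = R, OF assms this]
  show ?thesis using card_pop_cd_comp_infinite_le[OF assms, of R 1] card_pop_cd_comp_infinite_le[OF assms, of R 2]
    by linarith
qed

lemma exists_pop_cdis_pos_same_ones: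
  assumes tb: "valid_tb n tb" and i: "i < length R"
  shows "\<exists>x<length R. ones (R!x) = ones (R!i) \<and> pop_cdis n tb R x > 0"
proof -
  let ?v = "sorted_value n tb R 2"
  note mono = mono_on_sorted_value[OF tb, of R 2]
  obtain p where p: "p \<in> run_starts ?v (length R)" "?v p = ?v (sorted_pos tb R 2 i)"
    using run_start_exists[OF mono sorted_pos(1)[OF tb i]] by blast
  have pl: "p < length R" using p(1) by (simp add: run_starts_def)
  define x where "x = sorted_order tb R 2 ! p"
  have x: "x < length R" unfolding x_def using sorted_order_nth_less[OF tb pl] .
  have "pop_cd_comp n tb R 2 x > 0"
    using pop_cd_comp_eq_crowding_contrib[OF tb x, of 2] sorted_pos_nth[OF tb pl]
      crowding_contrib_run_start_pos[OF mono p(1)] unfolding x_def by simp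
  hence "pop_cdis n tb R x > 0"
    unfolding cdis_def using pop_cd_comp_nonneg[OF tb x, of 1] by (metis add_nonneg_pos)
  moreover have "ones (R!x) = ones (R!i)"
    using p(2) sorted_value_sorted_pos[OF tb i, of 2] unfolding sorted_value_def x_def by (simp add: omm_2)
  ultimately show ?thesis using x by blast
qed

text \<open>The lower bound on the second-objective crowding contribution of an individual whose two
  neighbours in the sorted order differ by at least 2.\<close>
definition large_cd :: "nat \<Rightarrow> tiebreak \<Rightarrow> pop \<Rightarrow> nat \<Rightarrow> bool" where
  "large_cd n tb R x \<longleftrightarrow> pop_cd_comp n tb R 2 x = \<infinity> \<or>
     (sorted_range n tb R 2 > 0 \<and> pop_cd_comp n tb R 2 x \<ge> ereal (2 / sorted_range n tb R 2))"

lemma large_cd_if_gap: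
  assumes tb: "valid_tb n tb" and p: "p < length R"
    and gap: "p = 0 \<or> p = length R - 1
      \<or> sorted_value n tb R 2 (p+1) - sorted_value n tb R 2 (p-1) \<ge> 2"
  shows "large_cd n tb R (sorted_order tb R 2 ! p)"
  using crowding_contrib_ge_gap[OF mono_on_sorted_value[OF tb] p gap]
    pop_cd_comp_eq_crowding_contrib[OF tb sorted_order_nth_less[OF tb p], of 2] sorted_pos_nth[OF tb p]
  unfolding large_cd_def by simp

lemma exists_large_cd_if_successor_missing:
  assumes tb: "valid_tb n tb" and i: "i < length R"
    and miss: "\<forall>y<length R. ones (R!y) \<noteq> ones (R!i) + 1"
  shows "\<exists>x<length R. ones (R!x) = ones (R!i) \<and> large_cd n tb R x"
proof -
  let ?m = "length R" and ?L = "sorted_order tb R 2" and ?v = "sorted_value n tb R 2"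
  note mono = mono_on_sorted_value[OF tb, of R 2]
  obtain p where p: "p \<in> run_ends ?v ?m" "?v p = ?v (sorted_pos tb R 2 i)"
    using run_end_exists[OF mono sorted_pos(1)[OF tb i]] by blast
  have pl: "p < ?m" using p(1) by (simp add: run_ends_def)
  have vp: "?v p = ones (R!i)" using p(2) sorted_value_sorted_pos[OF tb i, of 2] by (simp add: omm_2)
  have "p = 0 \<or> p = ?m - 1 \<or> ?v (p+1) - ?v (p-1) \<ge> 2"
  proof (cases "p = 0 \<or> p = ?m - 1")
    case False
    hence p1: "p + 1 < ?m" "p \<noteq> 0" using pl by auto
    have "?v (p-1) \<le> ?v p" using p1 by (intro mono_on_lessThanD[OF mono]) auto
    moreover have "?v p < ?v (p+1)" using p(1) False by (simp add: run_ends_def)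
    moreover have "ones (R ! (?L ! (p+1))) \<noteq> ones (R!i) + 1"
      using miss sorted_order_nth_less[OF tb p1(1)] by blast
    ultimately show ?thesis using vp unfolding sorted_value_def omm_2 by linarith
  qed blast
  moreover have "ones (R ! (?L ! p)) = ones (R!i)" using vp unfolding sorted_value_def omm_2 by simp
  ultimately show ?thesis using large_cd_if_gap[OF tb pl] sorted_order_nth_less[OF tb pl] by blast
qed

lemma exists_large_cd_if_predecessor_missing:
  assumes tb: "valid_tb n tb" and i: "i < length R" and pos: "ones (R!i) \<ge> 1"
    and miss: "\<forall>y<length R. ones (R!y) \<noteq> ones (R!i) - 1"
  shows "\<exists>x<length R. ones (R!x) = ones (R!i) \<and> large_cd n tb R x"
proof -
  let ?m = "length R" and ?L = "sorted_order tb R 2" and ?v = "sorted_value n tb R 2"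
  note mono = mono_on_sorted_value[OF tb, of R 2]
  obtain p where p: "p \<in> run_starts ?v ?m" "?v p = ?v (sorted_pos tb R 2 i)"
    using run_start_exists[OF mono sorted_pos(1)[OF tb i]] by blast
  have pl: "p < ?m" using p(1) by (simp add: run_starts_def)
  have vp: "?v p = ones (R!i)" using p(2) sorted_value_sorted_pos[OF tb i, of 2] by (simp add: omm_2)
  have "p = 0 \<or> p = ?m - 1 \<or> ?v (p+1) - ?v (p-1) \<ge> 2"
  proof (cases "p = 0 \<or> p = ?m - 1")
    case False
    hence p1: "p + 1 < ?m" "p \<noteq> 0" using pl by auto
    have "?v p \<le> ?v (p+1)" using p1 by (intro mono_on_lessThanD[OF mono]) auto
    moreover have "?v (p-1) < ?v p" using p(1) False by (simp add: run_starts_def)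
    moreover have "ones (R ! (?L ! (p-1))) \<noteq> ones (R!i) - 1"
      using miss sorted_order_nth_less[OF tb, of "p-1"] p1 by simp
    ultimately show ?thesis using vp pos unfolding sorted_value_def omm_2 by linarith
  qed blast
  moreover have "ones (R ! (?L ! p)) = ones (R!i)" using vp unfolding sorted_value_def omm_2 by simp
  ultimately show ?thesis using large_cd_if_gap[OF tb pl] sorted_order_nth_less[OF tb pl] by blast
qed

lemma sorted_value_first_le:
  assumes "valid_tb n tb" "y < length R"
  shows "sorted_value n tb R j 0 \<le> omm n j (R!y)"
  using mono_on_lessThanD[OF mono_on_sorted_value[OF assms(1)], of 0 "sorted_pos tb R j y" R j]
    sorted_pos(1)[OF assms, of j] sorted_value_sorted_pos[OF assms, of j] by simp

lemma sorted_value_last_ge: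
  assumes "valid_tb n tb" "y < length R"
  shows "omm n j (R!y) \<le> sorted_value n tb R j (length R - 1)"
proof -
  have "sorted_pos tb R j y \<le> length R - 1" using sorted_pos(1)[OF assms, of j] by simp
  thus ?thesis
    using mono_on_lessThanD[OF mono_on_sorted_value[OF assms(1)], of "sorted_pos tb R j y" "length R - 1" R j]
      assms(2) sorted_value_sorted_pos[OF assms, of j] by simp
qed

text \<open>Both objectives span the same range, namely the difference between the largest and the
  smallest number of ones in the population.\<close>
lemma sorted_range_eq:
  assumes tb: "valid_tb n tb" and R: "pop_of_length n R" "length R > 0"
  shows "sorted_range n tb R 1 = sorted_range n tb R 2"
proof -
  let ?l = "length R - 1"
  define w where "w j k = ones (R ! (sorted_order tb R j ! k))" for j k
  have idx: "sorted_order tb R j ! k < length R" if "k \<in> {0, ?l}" for k j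
    using sorted_order_nth_less[OF tb] R(2) that by auto
  have le_n: "w j k \<le> n" if "k \<in> {0, ?l}" for k j
    unfolding w_def using pop_of_length_ones_le[OF R(1) idx[OF that]] .
  have bounds: "w 1 0 \<le> n" "w 1 ?l \<le> n" "w 2 0 \<le> n" "w 2 ?l \<le> n" using le_n by auto
  have "n - w 2 0 \<le> n - w 1 ?l"
    using sorted_value_last_ge[OF tb idx[of 0 2], of 1] unfolding sorted_value_def omm_1 w_def by simp
  moreover have "w 2 0 \<le> w 1 ?l"
    using sorted_value_first_le[OF tb idx[of ?l 1], of 2] unfolding sorted_value_def omm_2 w_def by simp
  ultimately have min: "w 1 ?l = w 2 0" using bounds by linarith
  have "w 1 0 \<le> w 2 ?l"
    using sorted_value_last_ge[OF tb idx[of 0 1], of 2] unfolding sorted_value_def omm_2 w_def by simp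
  moreover have "n - w 1 0 \<le> n - w 2 ?l"
    using sorted_value_first_le[OF tb idx[of ?l 2], of 1] unfolding sorted_value_def omm_1 w_def by simp
  ultimately have max: "w 1 0 = w 2 ?l" using bounds by linarith
  from min max bounds show ?thesis
    unfolding sorted_value_def omm_1 omm_2 w_def by (simp add: of_nat_diff)
qed

definition interior_spread :: "nat \<Rightarrow> tiebreak \<Rightarrow> pop \<Rightarrow> nat \<Rightarrow> nat \<Rightarrow> real" where
  "interior_spread n tb R j k = (if k = 0 \<or> k = length R - 1 then 0
     else sorted_value n tb R j (k+1) - sorted_value n tb R j (k-1))"

lemma interior_spread_nonneg:
  assumes tb: "valid_tb n tb" and "k < length R"
  shows "interior_spread n tb R j k \<ge> 0"
proof (cases "k = 0 \<or> k = length R - 1")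
  case False
  have "sorted_value n tb R j (k-1) \<le> sorted_value n tb R j (k+1)" using False assms
    by (intro mono_on_lessThanD[OF mono_on_sorted_value[OF tb]]) auto
  thus ?thesis using False unfolding interior_spread_def by simp
qed (auto simp: interior_spread_def)

lemma sum_interior_spread_le:
  assumes tb: "valid_tb n tb" and m: "length R \<ge> 2"
  shows "(\<Sum>y<length R. interior_spread n tb R j (sorted_pos tb R j y)) \<le> 2 * sorted_range n tb R j"
proof -
  let ?m = "length R"
  have "(\<Sum>y<?m. interior_spread n tb R j (sorted_pos tb R j y)) = (\<Sum>k<?m. interior_spread n tb R j k)"
  proof (rule sum.reindex_bij_witness[where i="\<lambda>k. sorted_order tb R j ! k" and j="sorted_pos tb R j"])
    fix a assume "a \<in> {..<?m}"
    thus "sorted_order tb R j ! sorted_pos tb R j a = a" "sorted_pos tb R j a \<in> {..<?m}"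
      using sorted_pos[OF tb, of a R j] by auto
  next
    fix b assume "b \<in> {..<?m}"
    thus "sorted_pos tb R j (sorted_order tb R j ! b) = b" "sorted_order tb R j ! b \<in> {..<?m}"
      using sorted_pos_nth[OF tb, of b R j] sorted_order_nth_less[OF tb, of b R j] by auto
  qed simp
  also have "\<dots> = (\<Sum>k\<in>{1..<?m-1}. interior_spread n tb R j k)"
    by (rule sum.mono_neutral_right) (auto simp: interior_spread_def)
  also have "\<dots> = (\<Sum>k\<in>{1..<?m-1}. sorted_value n tb R j (k+1) - sorted_value n tb R j (k-1))"
    by (rule sum.cong) (auto simp: interior_spread_def)
  also have "\<dots> \<le> 2 * sorted_range n tb R j"
    by (rule sum_interior_spreads_le[OF mono_on_sorted_value[OF tb] m])
  finally show ?thesis .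
qed

lemma pop_cdis_eq_if_finite:
  assumes tb: "valid_tb n tb" and R: "pop_of_length n R" and y: "y < length R"
    and D: "sorted_range n tb R 2 > 0" and fin: "pop_cdis n tb R y \<noteq> \<infinity>"
  shows "pop_cdis n tb R y = ereal ((interior_spread n tb R 1 (sorted_pos tb R 1 y)
    + interior_spread n tb R 2 (sorted_pos tb R 2 y)) / sorted_range n tb R 2)"
proof -
  have "sorted_range n tb R 1 = sorted_range n tb R 2" using sorted_range_eq[OF tb R] y by (cases R) auto
  moreover have "pop_cd_comp n tb R 1 y \<noteq> \<infinity>" "pop_cd_comp n tb R 2 y \<noteq> \<infinity>"
    using fin pop_cd_comp_nonneg[OF tb y, of 1] pop_cd_comp_nonneg[OF tb y, of 2] unfolding cdis_def
    by auto
  ultimately show ?thesis using D unfolding cdis_def pop_cd_comp_eq_crowding_contrib[OF tb y]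
    by (auto simp: crowding_contrib_def interior_spread_def add_divide_distrib split: if_splits)
qed

text \<open>Spreads sum to at most \<open>4 D\<close> over both objectives, so at most \<open>2 D\<close> finite crowding
  distances reach \<open>2 / D\<close>; at most 4 others are infinite.\<close>
lemma card_pop_cdis_ge_le:
  assumes tb: "valid_tb n tb" and R: "pop_of_length n R" and D: "sorted_range n tb R 2 > 0"
  shows "real (card {y. y < length R \<and> pop_cdis n tb R y \<ge> ereal (2 / sorted_range n tb R 2)})
     \<le> 2 * sorted_range n tb R 2 + 4"
proof -
  let ?m = "length R" and ?D = "sorted_range n tb R 2"
  let ?g = "\<lambda>y. interior_spread n tb R 1 (sorted_pos tb R 1 y) + interior_spread n tb R 2 (sorted_pos tb R 2 y)"
  have m2: "?m \<ge> 2"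
  proof (rule ccontr)
    assume "\<not> ?m \<ge> 2"
    hence "?m - 1 = 0" by simp
    thus False using D by simp
  qed
  define Inf where "Inf = {y. y < ?m \<and> pop_cdis n tb R y = \<infinity>}"
  define Fin where "Fin = {y. y < ?m \<and> pop_cdis n tb R y \<ge> ereal (2 / ?D) \<and> pop_cdis n tb R y \<noteq> \<infinity>}"
  have g_ge: "?g y \<ge> 2" if y: "y \<in> Fin" for y
  proof -
    have y: "y < ?m" "pop_cdis n tb R y \<ge> ereal (2 / ?D)" "pop_cdis n tb R y \<noteq> \<infinity>"
      using y unfolding Fin_def by auto
    hence "2 / ?D \<le> ?g y / ?D" using pop_cdis_eq_if_finite[OF tb R y(1) D y(3)] by simp
    thus ?thesis using D divide_le_cancel[of 2 ?D "?g y"] by simp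
  qed
  have "2 * real (card Fin) \<le> (\<Sum>y\<in>Fin. ?g y)"
    using sum_mono[of Fin "\<lambda>_. 2" ?g] g_ge by simp
  also have "\<dots> \<le> (\<Sum>y<?m. ?g y)"
    by (rule sum_mono2) (auto simp: Fin_def intro!: add_nonneg_nonneg interior_spread_nonneg[OF tb] sorted_pos[OF tb])
  also have "\<dots> = (\<Sum>y<?m. interior_spread n tb R 1 (sorted_pos tb R 1 y))
      + (\<Sum>y<?m. interior_spread n tb R 2 (sorted_pos tb R 2 y))"
    by (rule sum.distrib)
  also have "\<dots> \<le> 2 * ?D + 2 * ?D"
  proof -
    have "sorted_range n tb R 1 = ?D" using sorted_range_eq[OF tb R] m2 by (cases R) auto
    thus ?thesis using sum_interior_spread_le[OF tb m2, of 1] sum_interior_spread_le[OF tb m2, of 2]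
      by argo
  qed
  finally have "real (card Fin) \<le> 2 * ?D" by simp
  moreover have "card Inf \<le> 4" unfolding Inf_def by (rule card_pop_cdis_infinite_le[OF tb])
  moreover have "card {y. y < ?m \<and> pop_cdis n tb R y \<ge> ereal (2 / ?D)} \<le> card Inf + card Fin"
    by (rule order_trans[OF card_mono card_Un_le]) (auto simp: Inf_def Fin_def)
  ultimately show ?thesis by linarith
qed

definition rivals :: "nat \<Rightarrow> tiebreak \<Rightarrow> pop \<Rightarrow> nat \<Rightarrow> nat set" where
  "rivals n tb R x = {y. y < length R \<and> y \<noteq> x \<and> pop_cdis n tb R y \<ge> pop_cdis n tb R x}"

lemma card_rivals_le_if_large_cd:
  assumes tb: "valid_tb n tb" and R: "pop_of_length n R" and x: "x < length R"
    and large: "large_cd n tb R x"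
  shows "card (rivals n tb R x) \<le> 2 * n + 3"
proof -
  let ?m = "length R" and ?c = "pop_cdis n tb R" and ?D = "sorted_range n tb R 2"
  have cx: "?c x \<ge> pop_cd_comp n tb R 2 x"
    using pop_cd_comp_nonneg[OF tb x, of 1] unfolding cdis_def by (simp add: add_increasing)
  show ?thesis
  proof (cases "pop_cd_comp n tb R 2 x = \<infinity>")
    case True
    hence "rivals n tb R x \<subseteq> {y. y < ?m \<and> ?c y = \<infinity>} - {x}" using cx by (auto simp: rivals_def)
    hence "card (rivals n tb R x) \<le> card ({y. y < ?m \<and> ?c y = \<infinity>} - {x})" by (intro card_mono) auto
    also have "\<dots> = card {y. y < ?m \<and> ?c y = \<infinity>} - 1" using x True cx by (intro card_Diff_singleton) auto
    also have "\<dots> \<le> 3" using card_pop_cdis_infinite_le[OF tb, of R] by simp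
    finally show ?thesis by simp
  next
    case False
    hence D: "?D > 0" and cx2: "?c x \<ge> ereal (2 / ?D)"
      using large cx unfolding large_cd_def by (auto intro: order_trans)
    let ?Big = "{y. y < ?m \<and> ?c y \<ge> ereal (2 / ?D)}"
    have "rivals n tb R x \<subseteq> ?Big - {x}" using cx2 by (auto simp: rivals_def intro: order_trans)
    hence "card (rivals n tb R x) \<le> card (?Big - {x})" by (intro card_mono) auto
    also have "\<dots> = card ?Big - 1" by (rule card_Diff_singleton) (use x cx2 in auto)
    finally have "real (card (rivals n tb R x)) \<le> real (card ?Big) - 1"
      using x cx2 card_gt_0_iff[of ?Big] by (cases "card ?Big") auto
    moreover have "sorted_value n tb R 2 (?m - 1) \<le> n" using sorted_value_le[OF tb R, of "?m - 1" 2] x by simp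
    moreover have "sorted_value n tb R 2 0 \<ge> 0" by (simp add: sorted_value_def)
    ultimately have "real (card (rivals n tb R x)) \<le> 2 * real n + 3"
      using card_pop_cdis_ge_le[OF tb R D] by argo
    thus ?thesis by linarith
  qed
qed

lemma exists_few_rivals_if_successor_missing:
  assumes tb: "valid_tb n tb" and R: "pop_of_length n R" and i: "i < length R"
    and miss: "\<forall>y<length R. ones (R!y) \<noteq> ones (R!i) + 1"
  shows "\<exists>x<length R. ones (R!x) = ones (R!i) \<and> card (rivals n tb R x) \<le> 2 * n + 3"
  using exists_large_cd_if_successor_missing[OF tb i miss] card_rivals_le_if_large_cd[OF tb R] by blast

lemma exists_few_rivals_if_predecessor_missing:
  assumes tb: "valid_tb n tb" and R: "pop_of_length n R" and i: "i < length R"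
    and pos: "ones (R!i) \<ge> 1" and miss: "\<forall>y<length R. ones (R!y) \<noteq> ones (R!i) - 1"
  shows "\<exists>x<length R. ones (R!x) = ones (R!i) \<and> card (rivals n tb R x) \<le> 2 * n + 3"
  using exists_large_cd_if_predecessor_missing[OF tb i pos miss] card_rivals_le_if_large_cd[OF tb R] by blast

section \<open>All individuals are Pareto optimal, and survival keeps every value\<close>

lemma not_sdom:
  assumes "length x = n" "length y = n"
  shows "\<not> sdom n x y"
  using ones_le_length[of x] ones_le_length[of y] assms unfolding sdom_def omm_def by auto

lemma front_1_eq:
  assumes "pop_of_length n R"
  shows "front n R 1 = {..<length R}"
  using assms not_sdom unfolding front_def pop_of_length_def by auto

lemma rank_eq_1:
  assumes "pop_of_length n R" "i < length R"
  shows "rank n R i = 1"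
  unfolding rank_def by (rule Least_equality) (use front_1_eq[OF assms(1)] assms(2) in auto)

lemma istar_eq_1:
  assumes "pop_of_length n R" "0 < N" "N \<le> length R"
  shows "istar n R N = 1"
proof -
  have "{i \<in> {..<length R}. rank n R i \<le> k} = (if k = 0 then {} else {..<length R})" for k
    using rank_eq_1[OF assms(1)] by auto
  thus ?thesis unfolding istar_def using assms(2,3) by (intro Least_equality) (auto split: if_splits)
qed

lemma cdis_front_eq_pop_cdis:
  assumes "pop_of_length n P" "i < length P"
  shows "cdis_front n tb P i = pop_cdis n tb P i"
  unfolding cdis_front_def rank_eq_1[OF assms] front_1_eq[OF assms(1)] ..

definition survivor_sets :: "nat \<Rightarrow> tiebreak \<Rightarrow> nat \<Rightarrow> pop \<Rightarrow> nat set set" where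
  "survivor_sets n tb N R = {A. A \<subseteq> {..<length R} \<and> card A = N \<and>
     (\<forall>a\<in>A. \<forall>b\<in>{..<length R} - A. pop_cdis n tb R b \<le> pop_cdis n tb R a)}"

lemma survive_eq_survivor_sets:
  assumes "pop_of_length n R" "0 < N" "N \<le> length R"
  shows "survive n tb N R
    = map_pmf (\<lambda>A. map (\<lambda>i. R ! i) (sorted_list_of_set A)) (pmf_of_set (survivor_sets n tb N R))"
proof -
  have none: "{i \<in> {..<length R}. rank n R i < 1} = {}" using rank_eq_1[OF assms(1)] by auto
  show ?thesis
    unfolding survive_def Let_def istar_eq_1[OF assms] front_1_eq[OF assms(1)] survivor_sets_def none
    by simp
qed

lemma exists_top_subset:
  fixes g :: "'a \<Rightarrow> 'b::linorder"
  assumes "finite F" "k \<le> card F"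
  shows "\<exists>A. A \<subseteq> F \<and> card A = k \<and> (\<forall>a\<in>A. \<forall>b\<in>F - A. g b \<le> g a)"
  using assms(2)
proof (induction k)
  case 0 thus ?case by (intro exI[of _ "{}"]) auto
next
  case (Suc k)
  then obtain A where A: "A \<subseteq> F" "card A = k" "\<forall>a\<in>A. \<forall>b\<in>F - A. g b \<le> g a" by auto
  have fin: "finite (F - A)" and ne: "F - A \<noteq> {}"
    using assms(1) A Suc.prems card_mono[OF assms(1) A(1)] by auto
  have "Max (g ` (F - A)) \<in> g ` (F - A)" using fin ne by (intro Max_in) auto
  then obtain c where c: "c \<in> F - A" "g c = Max (g ` (F - A))" by auto
  have "\<forall>b\<in>F - A. g b \<le> g c" using fin c(2) by auto
  thus ?case using A c assms(1) finite_subset[OF A(1)]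
    by (intro exI[of _ "insert c A"]) (auto simp: card_insert_if)
qed

lemma survivor_sets_nonempty:
  assumes "N \<le> length R"
  shows "survivor_sets n tb N R \<noteq> {}" "finite (survivor_sets n tb N R)"
proof -
  show "survivor_sets n tb N R \<noteq> {}"
    using exists_top_subset[of "{..<length R}" N "pop_cdis n tb R"] assms unfolding survivor_sets_def by auto
  have "survivor_sets n tb N R \<subseteq> Pow {..<length R}" unfolding survivor_sets_def by auto
  thus "finite (survivor_sets n tb N R)" by (rule finite_subset) simp
qed

text \<open>Fewer than \<open>N\<close> individuals have positive crowding distance, so survival by crowding
  distance keeps all of them.\<close>
lemma pop_cdis_pos_mem_survivor_set:
  assumes tb: "valid_tb n tb" and R: "pop_of_length n R" and N: "4 * (n + 1) \<le> N"
    and A: "A \<in> survivor_sets n tb N R" and x: "x < length R" "pop_cdis n tb R x > 0"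
  shows "x \<in> A"
proof (rule ccontr)
  assume "x \<notin> A"
  let ?Pos = "{y. y < length R \<and> pop_cdis n tb R y > 0}"
  have "A \<subseteq> ?Pos - {x}"
    using A x \<open>x \<notin> A\<close> unfolding survivor_sets_def by (fastforce intro: order.strict_trans2)
  hence "card A \<le> card (?Pos - {x})" by (intro card_mono) auto
  also have "\<dots> = card ?Pos - 1" using x by (intro card_Diff_singleton) auto
  finally show False using card_pop_cdis_pos_le[OF tb R] A N x unfolding survivor_sets_def by auto
qed

lemma survive_keeps_ones:
  assumes tb: "valid_tb n tb" and R: "pop_of_length n R" and N: "4 * (n + 1) \<le> N" "N \<le> length R"
    and P': "P' \<in> set_pmf (survive n tb N R)"
  shows "pop_of_length n P'" "length P' = N" "ones ` set R \<subseteq> ones ` set P'"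
proof -
  have "P' \<in> (\<lambda>A. map (\<lambda>i. R ! i) (sorted_list_of_set A)) ` survivor_sets n tb N R"
  proof -
    have "0 < N" using N(1) by simp
    from survive_eq_survivor_sets[OF R this N(2)] show ?thesis
      using P' survivor_sets_nonempty[OF N(2), of n tb] by simp
  qed
  then obtain A where A: "A \<in> survivor_sets n tb N R" and P'A: "P' = map (\<lambda>i. R ! i) (sorted_list_of_set A)"
    by blast
  have Asub: "A \<subseteq> {..<length R}" and cA: "card A = N" using A unfolding survivor_sets_def by auto
  have setP': "set P' = (\<lambda>i. R ! i) ` A" using P'A finite_subset[OF Asub] by simp
  show "length P' = N" using P'A cA by simp
  show "pop_of_length n P'" using R Asub unfolding pop_of_length_def setP' by auto
  show "ones ` set R \<subseteq> ones ` set P'"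
  proof
    fix w assume "w \<in> ones ` set R"
    then obtain i where "i < length R" "ones (R!i) = w" by (metis imageE in_set_conv_nth)
    then obtain x where x: "x < length R" "ones (R!x) = w" "pop_cdis n tb R x > 0"
      using exists_pop_cdis_pos_same_ones[OF tb] by metis
    hence "R ! x \<in> set P'" using pop_cdis_pos_mem_survivor_set[OF tb R N(1) A] unfolding setP' by auto
    thus "w \<in> ones ` set P'" using x by auto
  qed
qed

lemma covers_front_iff:
  assumes "pop_of_length n P"
  shows "covers_front n P \<longleftrightarrow> {0..n} \<subseteq> ones ` set P"
proof
  assume c: "covers_front n P"
  show "{0..n} \<subseteq> ones ` set P"
  proof
    fix w assume w: "w \<in> {0..n}"
    have "(n - w, n - (n - w)) \<in> pareto_front n" unfolding pareto_front_def by auto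
    then obtain x where x: "x \<in> set P" "fval n x = (n - w, n - (n - w))"
      using c unfolding covers_front_def by auto
    hence "ones x = w" using w unfolding fval_def omm_def by auto
    thus "w \<in> ones ` set P" using x by auto
  qed
next
  assume c: "{0..n} \<subseteq> ones ` set P"
  show "covers_front n P" unfolding covers_front_def
  proof
    fix q assume "q \<in> pareto_front n"
    then obtain k where k: "q = (k, n - k)" "k \<le> n" unfolding pareto_front_def by auto
    hence "n - k \<in> ones ` set P" using c by auto
    then obtain x where x: "x \<in> set P" "ones x = n - k" by auto
    hence "fval n x = q" using k unfolding fval_def omm_def by auto
    thus "q \<in> fval n ` set P" using x(1) by blast
  qed
qed

section \<open>Offspring generation\<close>

abbreviation child :: "mutation \<Rightarrow> nat \<Rightarrow> tiebreak \<Rightarrow> pop \<Rightarrow> nat \<Rightarrow> nat \<Rightarrow> bits pmf" where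
  "child mu n tb P a b \<equiv> tourn n tb P a b \<bind> (\<lambda>w. mutate mu n (P ! w))"

abbreviation pairing_slots :: "nat list \<Rightarrow> nat list \<Rightarrow> nat \<Rightarrow> (nat list \<times> nat) list" where
  "pairing_slots \<pi>1 \<pi>2 M \<equiv> [(\<pi>, i). \<pi> \<leftarrow> [\<pi>1, \<pi>2], i \<leftarrow> [0..<M]]"

definition perms :: "nat \<Rightarrow> nat list set" where
  "perms N = {xs. distinct xs \<and> set xs = {..<N}}"

definition distinct_pairs :: "nat \<Rightarrow> (nat \<times> nat) set" where
  "distinct_pairs N = {(a, b). a < N \<and> b < N \<and> a \<noteq> b}"

lemma offspring_Independent:
  "offspring Independent mu n tb N P
    = replicate_pmf N (pmf_of_set (distinct_pairs N) \<bind> (\<lambda>ab. child mu n tb P (fst ab) (snd ab)))"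
  unfolding offspring_def distinct_pairs_def by simp

lemma offspring_TwoPerm:
  "offspring TwoPerm mu n tb N P = pmf_of_set (perms N) \<bind> (\<lambda>\<pi>1. pmf_of_set (perms N) \<bind> (\<lambda>\<pi>2.
     seq_pmf (map (\<lambda>(\<pi>, i). child mu n tb P (\<pi> ! (2 * i)) (\<pi> ! (2 * i + 1))) (pairing_slots \<pi>1 \<pi>2 (N div 2)))))"
  unfolding offspring_def perms_def by simp

lemma length_pairing_slots: "length (pairing_slots \<pi>1 \<pi>2 M) = 2 * M"
  by (simp add: length_concat)

lemma set_pairing_slots: "set (pairing_slots \<pi>1 \<pi>2 M) = {\<pi>1, \<pi>2} \<times> {..<M}"
  by auto

lemma nth_pairing_slots: "i < M \<Longrightarrow> pairing_slots \<pi>1 \<pi>2 M ! i = (\<pi>1, i)"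
  by (simp add: nth_append)

lemma finite_perms: "finite (perms N)"
proof -
  have "perms N \<subseteq> {xs. set xs \<subseteq> {..<N} \<and> length xs = N}"
    unfolding perms_def using distinct_card by fastforce
  thus ?thesis by (rule finite_subset) (rule finite_lists_length_eq, simp)
qed

lemma perms_nonempty: "perms N \<noteq> {}"
  unfolding perms_def using distinct_upt[of 0 N] by (metis (mono_tags) atLeast_upt empty_iff mem_Collect_eq)

lemma length_perms: "xs \<in> perms N \<Longrightarrow> length xs = N"
  unfolding perms_def using distinct_card by fastforce

lemma nth_perms_less: "xs \<in> perms N \<Longrightarrow> p < N \<Longrightarrow> xs ! p < N"
  using nth_mem[of p xs] length_perms unfolding perms_def by fastforce

lemma finite_distinct_pairs: "finite (distinct_pairs N)"
  unfolding distinct_pairs_def by (rule finite_subset[of _ "{..<N} \<times> {..<N}"]) auto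

lemma distinct_pairs_nonempty: "N \<ge> 2 \<Longrightarrow> distinct_pairs N \<noteq> {}"
proof -
  assume "N \<ge> 2"
  hence "(0, 1) \<in> distinct_pairs N" unfolding distinct_pairs_def by auto
  thus ?thesis by auto
qed

lemma card_distinct_pairs: "card (distinct_pairs N) = N * (N - 1)"
proof -
  have "distinct_pairs N = ({..<N} \<times> {..<N}) - (\<lambda>a. (a, a)) ` {..<N}" unfolding distinct_pairs_def by auto
  moreover have "card ((\<lambda>a. (a, a)) ` {..<N}) = N" by (subst card_image) (auto simp: inj_on_def)
  moreover have "(\<lambda>a. (a, a)) ` {..<N} \<subseteq> {..<N} \<times> {..<N}" by auto
  ultimately have "card (distinct_pairs N) = N * N - N" by (simp add: card_Diff_subset card_cartesian_product)
  thus ?thesis by (simp add: algebra_simps)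
qed

lemma length_bitwise_mut: "y \<in> set_pmf (bitwise_mut n x) \<Longrightarrow> length y = length x"
  by (induction x arbitrary: y) auto

lemma length_mutate: "length x = n \<Longrightarrow> y \<in> set_pmf (mutate mu n x) \<Longrightarrow> length y = n"
  using length_bitwise_mut unfolding mutate_def flip_bit_def by (cases mu) (auto split: if_splits)

lemma tourn_support: "w \<in> set_pmf (tourn n tb P a b) \<Longrightarrow> w = a \<or> w = b"
  unfolding tourn_def by (auto split: if_splits)

lemma length_child:
  assumes "pop_of_length n P" "a < length P" "b < length P" "y \<in> set_pmf (child mu n tb P a b)"
  shows "length y = n"
  using assms tourn_support[of _ n tb P a b] length_mutate unfolding pop_of_length_def by (metis nth_mem set_bind_pmf UN_E)

lemma set_seq_pmf:
  "xs \<in> set_pmf (seq_pmf ps) \<Longrightarrow> length xs = length ps \<and> (\<forall>i<length ps. xs ! i \<in> set_pmf (ps ! i))"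
proof (induction ps arbitrary: xs)
  case (Cons p ps)
  then obtain x ys where "xs = x # ys" "x \<in> set_pmf p" "ys \<in> set_pmf (seq_pmf ps)" by auto
  thus ?case using Cons.IH[of ys] by (auto simp: nth_Cons split: nat.splits)
qed simp

lemma children_pairing_slots_support:
  assumes P: "pop_of_length n P" "length P = N" and N: "even N" and \<pi>: "\<pi>1 \<in> perms N" "\<pi>2 \<in> perms N"
    and Q: "Q \<in> set_pmf (seq_pmf (map (\<lambda>(\<pi>, i). child mu n tb P (\<pi> ! (2 * i)) (\<pi> ! (2 * i + 1)))
      (pairing_slots \<pi>1 \<pi>2 (N div 2))))"
  shows "pop_of_length n Q \<and> length Q = N"
proof -
  let ?ps = "map (\<lambda>(\<pi>, i). child mu n tb P (\<pi> ! (2 * i)) (\<pi> ! (2 * i + 1))) (pairing_slots \<pi>1 \<pi>2 (N div 2))"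
  have len: "length Q = length ?ps" and nth: "\<forall>i<length ?ps. Q ! i \<in> set_pmf (?ps ! i)"
    using set_seq_pmf[OF Q] by blast+
  have "length Q = N" using len N by (simp only: length_map length_pairing_slots) simp
  moreover have "length (Q ! k) = n" if "k < length Q" for k
  proof -
    have k: "k < length ?ps" using len that by (simp only:)
    have "?ps ! k \<in> (\<lambda>(\<pi>, i). child mu n tb P (\<pi> ! (2 * i)) (\<pi> ! (2 * i + 1))) ` ({\<pi>1, \<pi>2} \<times> {..<N div 2})"
      using nth_mem[OF k] by (simp only: set_map set_pairing_slots)
    then obtain s where s: "s \<in> {\<pi>1, \<pi>2} \<times> {..<N div 2}"
      and eq: "?ps ! k = (\<lambda>(\<pi>, i). child mu n tb P (\<pi> ! (2 * i)) (\<pi> ! (2 * i + 1))) s"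
      by (rule imageE)
    obtain \<pi> i where si: "s = (\<pi>, i)" by (cases s)
    have "Q ! k \<in> set_pmf (child mu n tb P (\<pi> ! (2 * i)) (\<pi> ! (2 * i + 1)))"
      using nth[rule_format, OF k] eq unfolding si by (simp only: case_prod_conv)
    moreover have "2 * i + 1 < N" using s N unfolding si by auto
    hence "\<pi> ! (2 * i) < length P" "\<pi> ! (2 * i + 1) < length P"
      using s \<pi> P(2) nth_perms_less[of \<pi> N] unfolding si by auto
    ultimately show ?thesis using length_child[OF P(1)] by blast
  qed
  ultimately show ?thesis unfolding pop_of_length_def by (metis in_set_conv_nth)
qed

lemma offspring_support:
  assumes P: "pop_of_length n P" "length P = N" and N: "N \<ge> 2"
    and ev: "sel = TwoPerm \<Longrightarrow> even N" and Q: "Q \<in> set_pmf (offspring sel mu n tb N P)"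
  shows "pop_of_length n Q \<and> length Q = N"
proof (cases sel)
  case Independent
  have "length y = n" if "y \<in> set_pmf (pmf_of_set (distinct_pairs N) \<bind> (\<lambda>ab. child mu n tb P (fst ab) (snd ab)))" for y
  proof -
    have "y \<in> (\<Union>ab\<in>distinct_pairs N. set_pmf (child mu n tb P (fst ab) (snd ab)))"
      using that by (simp add: set_pmf_of_set[OF distinct_pairs_nonempty[OF N] finite_distinct_pairs])
    then obtain ab where "ab \<in> distinct_pairs N" "y \<in> set_pmf (child mu n tb P (fst ab) (snd ab))"
      by blast
    thus ?thesis by (intro length_child[OF P(1)]) (auto simp: distinct_pairs_def P(2))
  qed
  thus ?thesis using Q unfolding Independent offspring_Independent set_replicate_pmf pop_of_length_def by auto
next
  case TwoPerm
  obtain \<pi>1 \<pi>2 where "\<pi>1 \<in> perms N" "\<pi>2 \<in> perms N" and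
    "Q \<in> set_pmf (seq_pmf (map (\<lambda>(\<pi>, i). child mu n tb P (\<pi> ! (2 * i)) (\<pi> ! (2 * i + 1))) (pairing_slots \<pi>1 \<pi>2 (N div 2))))"
    using Q finite_perms perms_nonempty unfolding TwoPerm offspring_TwoPerm by auto
  thus ?thesis using children_pairing_slots_support[OF P] ev TwoPerm by blast
qed

section \<open>Mutation creating a neighbouring value\<close>

lemma pmf_map_pmf_Cons: "pmf (map_pmf (Cons e) M) (c # cs) = (if e = c then pmf M cs else 0)"
proof (cases "e = c")
  case True thus ?thesis using pmf_map_inj'[of "Cons c" M cs] by (simp add: inj_def)
next
  case False
  have "Cons e -` {c # cs} = {}" using False by auto
  thus ?thesis using False by (simp add: pmf_map)
qed

lemma pmf_bitwise_mut_Cons: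
  assumes "n \<ge> 1"
  shows "pmf (bitwise_mut n (b # bs)) (c # cs)
    = (if b \<noteq> c then 1 / real n else 1 - 1 / real n) * pmf (bitwise_mut n bs) cs"
proof -
  have "bitwise_mut n (b # bs) = bernoulli_pmf (1 / real n) \<bind> (\<lambda>d. map_pmf (Cons (b \<noteq> d)) (bitwise_mut n bs))"
    by (simp add: map_pmf_def)
  thus ?thesis using assms by (simp add: pmf_bind integral_bernoulli_pmf pmf_map_pmf_Cons del: bitwise_mut.simps)
qed

lemma pmf_bitwise_mut_self: "n \<ge> 1 \<Longrightarrow> pmf (bitwise_mut n y) y = (1 - 1 / real n) ^ length y"
  by (induction y) (auto simp del: bitwise_mut.simps(2) simp add: pmf_bitwise_mut_Cons)

lemma pmf_bitwise_mut_flip_bit: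
  assumes "n \<ge> 1" "i < length y"
  shows "pmf (bitwise_mut n y) (flip_bit y i) = (1 / real n) * (1 - 1 / real n) ^ (length y - 1)"
  using assms(2)
proof (induction y arbitrary: i)
  case (Cons b bs)
  show ?case
  proof (cases i)
    case 0
    thus ?thesis using assms(1)
      by (simp del: bitwise_mut.simps add: flip_bit_def pmf_bitwise_mut_Cons pmf_bitwise_mut_self)
  next
    case (Suc j)
    have j: "j < length bs" using Cons.prems Suc by simp
    have "flip_bit (b # bs) i = b # flip_bit bs j" using Suc by (simp add: flip_bit_def)
    hence "pmf (bitwise_mut n (b # bs)) (flip_bit (b # bs) i)
        = (1 - 1 / real n) * ((1 / real n) * (1 - 1 / real n) ^ (length bs - 1))"
      using Cons.IH[OF j] assms(1) by (simp del: bitwise_mut.simps add: pmf_bitwise_mut_Cons)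
    also have "\<dots> = (1 / real n) * (1 - 1 / real n) ^ (length (b # bs) - 1)"
      using j by (cases "length bs") (simp_all add: mult_ac)
    finally show ?thesis .
  qed
qed simp

lemma one_minus_inverse_power_ge_exp:
  assumes "n \<ge> (2::nat)"
  shows "(1 - 1 / real n) ^ (n - 1) \<ge> exp (-1)"
proof -
  let ?x = "1 / (real n - 1)"
  have n1: "real n - 1 > 0" using assms by simp
  have "1 / exp ?x \<le> 1 / (1 + ?x)"
    using exp_ge_add_one_self[of ?x] n1 by (intro divide_left_mono) (auto simp: add_pos_pos)
  also have "1 / (1 + ?x) = 1 - 1 / real n" using n1 by (simp add: field_simps)
  finally have a: "exp (- ?x) \<le> 1 - 1 / real n" by (simp add: exp_minus field_simps)
  have "exp (-1) = exp (real (n - 1) * (- ?x))" using n1 assms by (simp add: of_nat_diff)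
  also have "\<dots> = exp (- ?x) ^ (n - 1)" by (rule exp_of_nat_mult)
  also have "\<dots> \<le> (1 - 1 / real n) ^ (n - 1)" by (rule power_mono[OF a]) simp
  finally show ?thesis .
qed

lemma ones_eq_card: "ones y = card {i. i < length y \<and> y ! i}"
  unfolding ones_def by (simp add: length_filter_conv_card)

lemma ones_flip_bit:
  assumes "i < length y"
  shows "ones (flip_bit y i) = (if y ! i then ones y - 1 else ones y + 1)"
proof -
  let ?S = "{j. j < length y \<and> y ! j}"
  have "{j. j < length (flip_bit y i) \<and> flip_bit y i ! j} = (if y ! i then ?S - {i} else insert i ?S)"
    using assms unfolding flip_bit_def by (auto simp: nth_list_update)
  thus ?thesis unfolding ones_eq_card using assms by (auto simp: card_insert_if)
qed

lemma inj_on_flip_bit: "inj_on (flip_bit y) {..<length y}"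
proof (rule inj_onI, rule ccontr)
  fix i j assume i: "i \<in> {..<length y}" and "j \<in> {..<length y}" "flip_bit y i = flip_bit y j" "i \<noteq> j"
  moreover have "flip_bit y i ! i = (\<not> y ! i)" using i by (simp add: flip_bit_def)
  ultimately show False by (simp add: flip_bit_def)
qed

lemma prob_mutate_flip_bit_ge:
  assumes len: "length y = n" and n: "n \<ge> 2" and I: "I \<subseteq> {..<n}"
  shows "measure_pmf.prob (mutate mu n y) (flip_bit y ` I) \<ge> real (card I) / (exp 1 * real n)"
proof -
  have fI: "finite I" using I finite_subset by blast
  have inj: "inj_on (flip_bit y) I" using inj_on_flip_bit[of y] I len by (auto intro: inj_on_subset)
  have n0: "real n > 0" using n by simp
  show ?thesis
  proof (cases mu)
    case OneBit
    have "I \<subseteq> {..<n} \<inter> (flip_bit y -` (flip_bit y ` I))" using I by auto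
    hence "real (card I) / real n \<le> real (card ({..<n} \<inter> (flip_bit y -` (flip_bit y ` I)))) / real n"
      using n0 by (intro divide_right_mono) (auto intro: card_mono)
    also have "\<dots> = measure_pmf.prob (pmf_of_set {..<n}) (flip_bit y -` (flip_bit y ` I))"
      using n by (subst measure_pmf_of_set) (auto simp: lessThan_empty_iff)
    also have "\<dots> = measure_pmf.prob (mutate mu n y) (flip_bit y ` I)"
      unfolding OneBit mutate_def by simp
    finally have "real (card I) / real n \<le> measure_pmf.prob (mutate mu n y) (flip_bit y ` I)" .
    moreover have "real (card I) / (exp 1 * real n) \<le> real (card I) / real n"
      using n0 by (intro divide_left_mono) (auto simp: mult_le_cancel_right1)
    ultimately show ?thesis by linarith
  next
    case Bitwise
    have "measure_pmf.prob (mutate mu n y) (flip_bit y ` I) = (\<Sum>i\<in>I. pmf (bitwise_mut n y) (flip_bit y i))"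
      unfolding Bitwise mutate_def using fI inj by (simp add: measure_measure_pmf_finite sum.reindex)
    also have "\<dots> = real (card I) * ((1 / real n) * (1 - 1 / real n) ^ (n - 1))"
      using I len n by (simp add: pmf_bitwise_mut_flip_bit subset_iff)
    also have "\<dots> \<ge> real (card I) * ((1 / real n) * exp (-1))"
      using one_minus_inverse_power_ge_exp[OF n] n0 by (intro mult_left_mono) auto
    also have "real (card I) * ((1 / real n) * exp (-1)) = real (card I) / (exp 1 * real n)"
      by (simp add: exp_minus field_simps)
    finally show ?thesis .
  qed
qed

lemma prob_mutate_ones_Suc_ge:
  assumes len: "length y = n" and n: "n \<ge> 2"
  shows "measure_pmf.prob (mutate mu n y) {z. ones z = ones y + 1} \<ge> real (n - ones y) / (exp 1 * real n)"
proof -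
  let ?I = "{i. i < n \<and> \<not> y ! i}"
  have "card ?I = n - ones y"
  proof -
    have "?I = {..<n} - {i. i < length y \<and> y ! i}" using len by auto
    thus ?thesis using len by (simp add: card_Diff_subset ones_eq_card subset_iff)
  qed
  moreover have "flip_bit y ` ?I \<subseteq> {z. ones z = ones y + 1}" using len by (auto simp: ones_flip_bit)
  hence "measure_pmf.prob (mutate mu n y) (flip_bit y ` ?I) \<le> measure_pmf.prob (mutate mu n y) {z. ones z = ones y + 1}"
    by (rule measure_pmf.finite_measure_mono) simp
  moreover have "?I \<subseteq> {..<n}" by auto
  ultimately show ?thesis using prob_mutate_flip_bit_ge[OF len n, of ?I mu] by simp
qed

lemma prob_mutate_ones_pred_ge:
  assumes len: "length y = n" and n: "n \<ge> 2"
  shows "measure_pmf.prob (mutate mu n y) {z. ones z = ones y - 1} \<ge> real (ones y) / (exp 1 * real n)"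
proof -
  let ?I = "{i. i < n \<and> y ! i}"
  have "card ?I = ones y" using len by (simp add: ones_eq_card)
  moreover have "flip_bit y ` ?I \<subseteq> {z. ones z = ones y - 1}" using len by (auto simp: ones_flip_bit)
  hence "measure_pmf.prob (mutate mu n y) (flip_bit y ` ?I) \<le> measure_pmf.prob (mutate mu n y) {z. ones z = ones y - 1}"
    by (rule measure_pmf.finite_measure_mono) simp
  moreover have "?I \<subseteq> {..<n}" by auto
  ultimately show ?thesis using prob_mutate_flip_bit_ge[OF len n, of ?I mu] by simp
qed

section \<open>Tournaments won by an individual with few rivals\<close>

lemma measure_pmf_prob_bind:
  "measure_pmf.prob (bind_pmf M f) A = measure_pmf.expectation M (\<lambda>x. measure_pmf.prob (f x) A)"
proof -
  have "ennreal (measure_pmf.prob (bind_pmf M f) A) = (\<integral>\<^sup>+x. emeasure (f x) A \<partial>M)"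
    by (simp add: measure_pmf.emeasure_eq_measure[symmetric] emeasure_bind_pmf)
  also have "\<dots> = ennreal (measure_pmf.expectation M (\<lambda>x. measure_pmf.prob (f x) A))"
    by (simp add: measure_pmf.emeasure_eq_measure)
      (intro nn_integral_eq_integral measure_pmf.integrable_const_bound[where B=1], auto)
  finally show ?thesis by (simp add: integral_nonneg)
qed

lemma expectation_pmf_of_set_ge:
  assumes "finite S" "S \<noteq> {}" "G \<subseteq> S" "\<And>s. s \<in> S \<Longrightarrow> f s \<ge> (0::real)" "\<And>s. s \<in> G \<Longrightarrow> f s \<ge> c"
  shows "measure_pmf.expectation (pmf_of_set S) f \<ge> real (card G) * c / real (card S)"
proof -
  have "real (card G) * c \<le> (\<Sum>s\<in>G. f s)" using sum_mono[of G "\<lambda>_. c" f] assms(5) by simp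
  also have "\<dots> \<le> (\<Sum>s\<in>S. f s)" by (rule sum_mono2) (use assms in auto)
  finally show ?thesis using assms by (simp add: integral_pmf_of_set divide_right_mono)
qed

lemma prob_replicate_pmf_none:
  "measure_pmf.prob (replicate_pmf k D) {Q. \<forall>z\<in>set Q. z \<notin> E} = (1 - measure_pmf.prob D E) ^ k"
proof (induction k)
  case (Suc k)
  let ?S = "{Q. \<forall>z\<in>set Q. z \<notin> E}"
  have "replicate_pmf (Suc k) D = D \<bind> (\<lambda>x. map_pmf (Cons x) (replicate_pmf k D))"
    by (simp add: map_pmf_def)
  hence "measure_pmf.prob (replicate_pmf (Suc k) D) ?S
      = measure_pmf.expectation D (\<lambda>x. measure_pmf.prob (map_pmf (Cons x) (replicate_pmf k D)) ?S)"
    by (simp add: measure_pmf_prob_bind)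
  also have "\<dots> = measure_pmf.expectation D (\<lambda>x. indicator (- E) x * (1 - measure_pmf.prob D E) ^ k)"
  proof (rule Bochner_Integration.integral_cong[OF refl])
    fix x
    have "Cons x -` ?S = (if x \<in> E then {} else ?S)" by auto
    thus "measure_pmf.prob (map_pmf (Cons x) (replicate_pmf k D)) ?S
        = indicator (- E) x * (1 - measure_pmf.prob D E) ^ k"
      using Suc.IH by (auto simp: indicator_def)
  qed
  also have "\<dots> = measure_pmf.prob D (- E) * (1 - measure_pmf.prob D E) ^ k" by simp
  also have "measure_pmf.prob D (- E) = 1 - measure_pmf.prob D E"
    using measure_pmf.prob_compl[of E D] by (simp add: Compl_eq_Diff_UNIV)
  finally show ?case by simp
qed simp

lemma one_minus_power_ge:
  fixes q :: real
  assumes "0 \<le> q" "q \<le> 1"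
  shows "1 - (1 - q) ^ N \<ge> real N * q / (1 + real N * q)"
proof -
  have pos: "1 + real N * q > 0" using assms by (simp add: add_pos_nonneg)
  have "(1 - q) ^ N * (1 + real N * q) \<le> (1 - q) ^ N * (1 + q) ^ N"
    using assms by (intro mult_left_mono Bernoulli_inequality) auto
  also have "\<dots> = (1 - q^2) ^ N" by (simp add: power_mult_distrib[symmetric] algebra_simps power2_eq_square)
  also have "\<dots> \<le> 1" using assms by (intro power_le_one) (auto simp: power2_eq_square mult_le_one)
  finally have "(1 - q) ^ N \<le> 1 / (1 + real N * q)" using pos by (simp add: le_divide_eq)
  moreover have "1 - 1 / (1 + real N * q) = real N * q / (1 + real N * q)" using pos by (simp add: field_simps)
  ultimately show ?thesis by linarith
qed

lemma prob_replicate_pmf_hit_ge: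
  "measure_pmf.prob (replicate_pmf N D) {Q. \<exists>z\<in>set Q. z \<in> E}
    \<ge> real N * measure_pmf.prob D E / (1 + real N * measure_pmf.prob D E)"
proof -
  have "{Q. \<exists>z\<in>set Q. z \<in> E} = UNIV - {Q. \<forall>z\<in>set Q. z \<notin> E}" by auto
  hence "measure_pmf.prob (replicate_pmf N D) {Q. \<exists>z\<in>set Q. z \<in> E} = 1 - (1 - measure_pmf.prob D E) ^ N"
    using measure_pmf.prob_compl[of "{Q. \<forall>z\<in>set Q. z \<notin> E}" "replicate_pmf N D"]
    by (simp add: prob_replicate_pmf_none)
  thus ?thesis using one_minus_power_ge[of "measure_pmf.prob D E" N] by simp
qed

lemma map_pmf_nth_seq_pmf: "i < length ps \<Longrightarrow> map_pmf (\<lambda>Q. Q ! i) (seq_pmf ps) = ps ! i"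
proof (induction ps arbitrary: i)
  case (Cons p ps)
  show ?case
  proof (cases i)
    case 0
    have "map_pmf (\<lambda>Q. Q ! i) (seq_pmf (p # ps)) = p \<bind> (\<lambda>x. map_pmf (\<lambda>_. x) (seq_pmf ps))"
      using 0 by (simp add: map_bind_pmf map_pmf_def[symmetric] pmf.map_comp o_def)
    thus ?thesis using 0 by (simp add: map_pmf_const bind_return_pmf')
  next
    case (Suc j)
    have "map_pmf (\<lambda>Q. Q ! i) (seq_pmf (p # ps)) = p \<bind> (\<lambda>x. map_pmf (\<lambda>Q. Q ! j) (seq_pmf ps))"
      using Suc by (simp add: map_bind_pmf map_pmf_def[symmetric] pmf.map_comp o_def)
    thus ?thesis using Cons Suc by simp
  qed
qed simp

lemma prob_seq_pmf_hit_ge_nth: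
  assumes "i < length ps"
  shows "measure_pmf.prob (seq_pmf ps) {Q. \<exists>z\<in>set Q. z \<in> E} \<ge> measure_pmf.prob (ps ! i) E"
proof -
  have "measure_pmf.prob (ps ! i) E = measure_pmf.prob (seq_pmf ps) ({Q. Q ! i \<in> E} \<inter> set_pmf (seq_pmf ps))"
    by (simp add: map_pmf_nth_seq_pmf[OF assms, symmetric] vimage_def measure_Int_set_pmf)
  also have "\<dots> \<le> measure_pmf.prob (seq_pmf ps) {Q. \<exists>z\<in>set Q. z \<in> E}"
    by (rule measure_pmf.finite_measure_mono) (use assms set_seq_pmf in \<open>fastforce intro: nth_mem\<close>)+
  finally show ?thesis .
qed

lemma tourn_eq_return_if_cdis_less:
  assumes P: "pop_of_length n P" and x: "x < length P" and y: "y < length P"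
    and less: "pop_cdis n tb P y < pop_cdis n tb P x"
  shows "tourn n tb P x y = return_pmf x" "tourn n tb P y x = return_pmf x"
  using less unfolding tourn_def rank_eq_1[OF P x] rank_eq_1[OF P y]
    cdis_front_eq_pop_cdis[OF P x] cdis_front_eq_pop_cdis[OF P y]
  by auto

definition weaker :: "nat \<Rightarrow> tiebreak \<Rightarrow> pop \<Rightarrow> nat \<Rightarrow> nat set" where
  "weaker n tb P x = {y. y < length P \<and> y \<noteq> x \<and> pop_cdis n tb P y < pop_cdis n tb P x}"

lemma weaker_subset: "weaker n tb P x \<subseteq> {..<length P} - {x}"
  unfolding weaker_def by auto

lemma card_weaker_ratio_ge:
  assumes x: "x < length P" and N: "length P \<ge> 4 * (n + 1)" and n: "n \<ge> 3"
    and few: "card (rivals n tb P x) \<le> 2 * n + 3"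
  shows "real (card (weaker n tb P x)) / real (length P - 1) \<ge> 3 / 8"
proof -
  have un: "{..<length P} - {x} = weaker n tb P x \<union> rivals n tb P x"
    and dis: "weaker n tb P x \<inter> rivals n tb P x = {}"
    unfolding weaker_def rivals_def by auto
  have "length P - 1 = card ({..<length P} - {x})" using x by simp
  hence "length P - 1 = card (weaker n tb P x) + card (rivals n tb P x)"
    unfolding un by (subst card_Un_disjoint[OF _ _ dis, symmetric]) (auto simp: weaker_def rivals_def)
  hence "card (weaker n tb P x) \<ge> length P - 1 - (2 * n + 3)" using few by linarith
  hence "real (card (weaker n tb P x)) \<ge> real (length P) - 1 - (2 * real n + 3)" using N by linarith
  moreover have "real (length P) \<ge> 4 * real n + 4" "real n \<ge> 3" using N n by simp_all
  ultimately have "3 / 8 * (real (length P) - 1) \<le> real (card (weaker n tb P x))" by (simp add: algebra_simps)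
  thus ?thesis using N by (simp add: le_divide_eq of_nat_diff)
qed

lemma prob_child_distinct_pairs_ge:
  assumes P: "pop_of_length n P" "length P = N" and x: "x < N" and N: "N \<ge> 2"
  shows "measure_pmf.prob (pmf_of_set (distinct_pairs N) \<bind> (\<lambda>ab. child mu n tb P (fst ab) (snd ab))) E
    \<ge> real (2 * card (weaker n tb P x)) * measure_pmf.prob (mutate mu n (P ! x)) E / real (N * (N - 1))"
proof -
  let ?W = "weaker n tb P x"
  define G where "G = (\<lambda>y. (x, y)) ` ?W \<union> (\<lambda>y. (y, x)) ` ?W"
  have W: "?W \<subseteq> {..<N} - {x}" using weaker_subset P(2) by blast
  have "card G = card ((\<lambda>y. (x, y)) ` ?W) + card ((\<lambda>y. (y, x)) ` ?W)"
    unfolding G_def using W finite_subset[OF W] by (intro card_Un_disjoint) auto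
  also have "\<dots> = 2 * card ?W" by (subst (1 2) card_image) (auto simp: inj_on_def)
  finally have cG: "card G = 2 * card ?W" .
  have hit: "measure_pmf.prob (child mu n tb P (fst ab) (snd ab)) E = measure_pmf.prob (mutate mu n (P ! x)) E"
    if "ab \<in> G" for ab
  proof -
    obtain y where y: "y \<in> ?W" "ab = (x, y) \<or> ab = (y, x)" using \<open>ab \<in> G\<close> unfolding G_def by auto
    hence "y < length P" "pop_cdis n tb P y < pop_cdis n tb P x" unfolding weaker_def by auto
    hence "tourn n tb P (fst ab) (snd ab) = return_pmf x"
      using y(2) tourn_eq_return_if_cdis_less[OF P(1)] x P(2) by auto
    thus ?thesis by (simp add: bind_return_pmf)
  qed
  have G: "G \<subseteq> distinct_pairs N" unfolding G_def distinct_pairs_def using W x by auto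
  have "measure_pmf.prob (pmf_of_set (distinct_pairs N) \<bind> (\<lambda>ab. child mu n tb P (fst ab) (snd ab))) E
    \<ge> real (card G) * measure_pmf.prob (mutate mu n (P ! x)) E / real (card (distinct_pairs N))"
    by (subst measure_pmf_prob_bind, rule expectation_pmf_of_set_ge[OF finite_distinct_pairs distinct_pairs_nonempty[OF N] G])
      (use hit in auto)
  thus ?thesis unfolding cG card_distinct_pairs .
qed

lemma prob_offspring_Independent_hit_ge:
  assumes P: "pop_of_length n P" "length P = N" and N: "N \<ge> 4 * (n + 1)" and n: "n \<ge> 3"
    and x: "x < N" and few: "card (rivals n tb P x) \<le> 2 * n + 3"
  shows "measure_pmf.prob (offspring Independent mu n tb N P) {Q. \<exists>z\<in>set Q. z \<in> E}
      \<ge> measure_pmf.prob (mutate mu n (P ! x)) E / 4"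
proof -
  let ?W = "weaker n tb P x" and ?mu = "measure_pmf.prob (mutate mu n (P ! x)) E"
  let ?D = "pmf_of_set (distinct_pairs N) \<bind> (\<lambda>ab. child mu n tb P (fst ab) (snd ab))"
  define s0 where "s0 = 2 * (real (card ?W) / real (N - 1) * ?mu)"
  define s where "s = real N * measure_pmf.prob ?D E"
  have N2: "N \<ge> 2" using N by simp
  have ratio: "3 / 8 \<le> real (card ?W) / real (N - 1)"
    using card_weaker_ratio_ge[OF _ _ n few] x N P(2) by simp
  have "card ?W \<le> N - 1" using card_mono[OF _ weaker_subset[of n tb P x]] x P(2) by simp
  hence "real (card ?W) / real (N - 1) \<le> 1" using N2 by (simp add: divide_le_eq)
  hence "real (card ?W) / real (N - 1) * ?mu \<le> 1" by (intro mult_le_one) auto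
  hence s0: "0 \<le> s0" "s0 \<le> 2" unfolding s0_def by auto
  have "s0 \<le> s"
    using prob_child_distinct_pairs_ge[OF P x N2, of tb mu E] N2
    unfolding s0_def s_def by (simp add: field_simps of_nat_diff)
  hence "s0 / (1 + s0) \<le> s / (1 + s)" using s0 by (simp add: field_simps)
  moreover have "s0 / 3 \<le> s0 / (1 + s0)" using s0 by (intro divide_left_mono) auto
  moreover have "?mu / 4 \<le> s0 / 3"
  proof -
    have "?mu / 4 = 2 / 3 * (3 / 8 * ?mu)" by simp
    also have "\<dots> \<le> 2 / 3 * (real (card ?W) / real (N - 1) * ?mu)"
      using ratio by (intro mult_left_mono mult_right_mono) auto
    finally show ?thesis unfolding s0_def by simp
  qed
  moreover have "s / (1 + s) \<le> measure_pmf.prob (offspring Independent mu n tb N P) {Q. \<exists>z\<in>set Q. z \<in> E}"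
    unfolding s_def offspring_Independent by (rule prob_replicate_pmf_hit_ge)
  ultimately show ?thesis by linarith
qed

definition pos_in :: "nat list \<Rightarrow> nat \<Rightarrow> nat" where
  "pos_in \<pi> x = (THE p. p < length \<pi> \<and> \<pi> ! p = x)"

text \<open>In a two-permutation tournament the individuals at positions \<open>2 i\<close> and \<open>2 i + 1\<close> meet.\<close>
definition slot_mate :: "nat \<Rightarrow> nat" where
  "slot_mate p = (if even p then p + 1 else p - 1)"

definition tournament_partner :: "nat list \<Rightarrow> nat \<Rightarrow> nat" where
  "tournament_partner \<pi> x = \<pi> ! slot_mate (pos_in \<pi> x)"

lemma pos_in_unique:
  assumes "\<pi> \<in> perms N" "p < N" "\<pi> ! p = x"
  shows "pos_in \<pi> x = p"
proof -
  have d: "distinct \<pi>" using assms(1) unfolding perms_def by simp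
  show ?thesis unfolding pos_in_def
    by (rule the_equality) (use assms(2,3) d length_perms[OF assms(1)] nth_eq_iff_index_eq in metis)+
qed

lemma pos_in:
  assumes "\<pi> \<in> perms N" "x < N"
  shows "pos_in \<pi> x < N" "\<pi> ! pos_in \<pi> x = x"
proof -
  have "x \<in> set \<pi>" using assms unfolding perms_def by auto
  then obtain p where "p < N" "\<pi> ! p = x" using length_perms[OF assms(1)] by (auto simp: in_set_conv_nth)
  thus "pos_in \<pi> x < N" "\<pi> ! pos_in \<pi> x = x" using pos_in_unique[OF assms(1)] by auto
qed

lemma slot_mate:
  assumes "even N" "p < N"
  shows "slot_mate p < N" "slot_mate p \<noteq> p"
  using assms unfolding slot_mate_def by (auto elim!: evenE oddE)

lemma tournament_partner:
  assumes \<pi>: "\<pi> \<in> perms N" and x: "x < N" and N: "even N"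
  shows "tournament_partner \<pi> x < N" "tournament_partner \<pi> x \<noteq> x"
proof -
  note p = pos_in[OF \<pi> x] and m = slot_mate[OF N pos_in(1)[OF \<pi> x]]
  show "tournament_partner \<pi> x < N" unfolding tournament_partner_def using nth_perms_less[OF \<pi> m(1)] .
  show "tournament_partner \<pi> x \<noteq> x" unfolding tournament_partner_def
    using \<pi> p m length_perms[OF \<pi>] unfolding perms_def by (metis mem_Collect_eq nth_eq_iff_index_eq)
qed

lemma map_transpose_perms:
  assumes "\<pi> \<in> perms N" "y < N" "z < N"
  shows "map (Transposition.transpose y z) \<pi> \<in> perms N"
proof -
  have "Transposition.transpose y z ` {..<N} = {..<N}" using assms(2,3) by simp
  thus ?thesis using assms(1) unfolding perms_def by (simp add: distinct_map inj_on_transpose)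
qed

lemma tournament_partner_map_transpose:
  assumes \<pi>: "\<pi> \<in> perms N" and "x < N" "y < N" "z < N" "x \<noteq> y" "x \<noteq> z" "even N"
  shows "tournament_partner (map (Transposition.transpose y z) \<pi>) x = Transposition.transpose y z (tournament_partner \<pi> x)"
proof -
  note p = pos_in[OF \<pi> assms(2)]
  have "map (Transposition.transpose y z) \<pi> ! pos_in \<pi> x = x"
    using p length_perms[OF \<pi>] assms(5,6) by simp
  hence "pos_in (map (Transposition.transpose y z) \<pi>) x = pos_in \<pi> x"
    using pos_in_unique[OF map_transpose_perms[OF \<pi> assms(3,4)] p(1)] by simp
  moreover have "slot_mate (pos_in \<pi> x) < length \<pi>" using slot_mate[OF assms(7) p(1)] length_perms[OF \<pi>] by simp
  ultimately show ?thesis unfolding tournament_partner_def by simp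
qed

lemma card_partner_eq:
  assumes x: "x < N" and N: "even N" and y: "y \<in> {..<N} - {x}" and z: "z \<in> {..<N} - {x}"
  shows "card {\<pi>\<in>perms N. tournament_partner \<pi> x = y} = card {\<pi>\<in>perms N. tournament_partner \<pi> x = z}"
proof (rule bij_betw_same_card[of "map (Transposition.transpose y z)"], rule bij_betw_byWitness)
  let ?t = "map (Transposition.transpose y z)"
  have yz: "y < N" "z < N" "x \<noteq> y" "x \<noteq> z" using y z by auto
  show "\<forall>a\<in>{\<pi>\<in>perms N. tournament_partner \<pi> x = y}. ?t (?t a) = a"
    "\<forall>a\<in>{\<pi>\<in>perms N. tournament_partner \<pi> x = z}. ?t (?t a) = a"
    by (simp_all add: comp_def)
  show "?t ` {\<pi>\<in>perms N. tournament_partner \<pi> x = y} \<subseteq> {\<pi>\<in>perms N. tournament_partner \<pi> x = z}"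
    "?t ` {\<pi>\<in>perms N. tournament_partner \<pi> x = z} \<subseteq> {\<pi>\<in>perms N. tournament_partner \<pi> x = y}"
    using map_transpose_perms[OF _ yz(1,2)] tournament_partner_map_transpose[OF _ x yz N] by auto
qed

lemma partner_ratio:
  assumes x: "x < N" and N: "even N" and W: "W \<subseteq> {..<N} - {x}"
  shows "real (card {\<pi>\<in>perms N. tournament_partner \<pi> x \<in> W}) / real (card (perms N)) = real (card W) / real (N - 1)"
proof -
  define y0 :: nat where "y0 = (if x = 0 then 1 else 0)"
  have "N \<ge> 2" using x N by (auto elim!: evenE)
  hence y0: "y0 \<in> {..<N} - {x}" unfolding y0_def by auto
  define c where "c = card {\<pi>\<in>perms N. tournament_partner \<pi> x = y0}"
  have card_in: "card {\<pi>\<in>perms N. tournament_partner \<pi> x \<in> S} = card S * c" if "S \<subseteq> {..<N} - {x}" for S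
  proof -
    have "{\<pi>\<in>perms N. tournament_partner \<pi> x \<in> S} = (\<Union>y\<in>S. {\<pi>\<in>perms N. tournament_partner \<pi> x = y})" by auto
    hence "card {\<pi>\<in>perms N. tournament_partner \<pi> x \<in> S} = (\<Sum>y\<in>S. card {\<pi>\<in>perms N. tournament_partner \<pi> x = y})"
      using finite_subset[OF that] finite_perms by (simp, intro card_UN_disjoint) auto
    also have "\<dots> = (\<Sum>y\<in>S. c)" unfolding c_def using card_partner_eq[OF x N _ y0] that
      by (intro sum.cong) auto
    also have "\<dots> = card S * c" by simp
    finally show ?thesis .
  qed
  have "{\<pi>\<in>perms N. tournament_partner \<pi> x \<in> {..<N} - {x}} = perms N"
    using tournament_partner[OF _ x N] by auto
  hence cP: "card (perms N) = (N - 1) * c" using card_in[of "{..<N} - {x}"] x by simp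
  hence "c > 0" using finite_perms perms_nonempty by (metis card_gt_0_iff mult_0_right neq0_conv)
  thus ?thesis unfolding cP card_in[OF W] by (simp add: field_simps)
qed

text \<open>If the partner of \<open>x\<close> in the first permutation is weaker, then \<open>x\<close> is a parent and one
  of its children is a mutant of \<open>x\<close>.\<close>
lemma prob_seq_pmf_hit_if_partner_weaker:
  assumes P: "pop_of_length n P" "length P = N" and N: "even N" and x: "x < N"
    and \<pi>1: "\<pi>1 \<in> perms N" and partner: "tournament_partner \<pi>1 x \<in> weaker n tb P x"
  shows "measure_pmf.prob (seq_pmf (map (\<lambda>(\<pi>, i). child mu n tb P (\<pi> ! (2 * i)) (\<pi> ! (2 * i + 1)))
      (pairing_slots \<pi>1 \<pi>2 (N div 2)))) {Q. \<exists>z\<in>set Q. z \<in> E}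
    \<ge> measure_pmf.prob (mutate mu n (P ! x)) E"
proof -
  let ?ps = "map (\<lambda>(\<pi>, i). child mu n tb P (\<pi> ! (2 * i)) (\<pi> ! (2 * i + 1))) (pairing_slots \<pi>1 \<pi>2 (N div 2))"
  define p where "p = pos_in \<pi>1 x"
  define i where "i = p div 2"
  have p: "p < N" "\<pi>1 ! p = x" using pos_in[OF \<pi>1 x] unfolding p_def by auto
  have i: "i < N div 2" unfolding i_def using p N by (auto elim!: evenE)
  have mate: "\<pi>1 ! slot_mate p < length P" "pop_cdis n tb P (\<pi>1 ! slot_mate p) < pop_cdis n tb P x"
    using partner unfolding weaker_def tournament_partner_def p_def by auto
  have "tourn n tb P (\<pi>1 ! (2 * i)) (\<pi>1 ! (2 * i + 1)) = return_pmf x"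
  proof (cases "even p")
    case True
    hence "2 * i = p" "2 * i + 1 = slot_mate p" unfolding i_def slot_mate_def by auto
    thus ?thesis using tourn_eq_return_if_cdis_less(1)[OF P(1) _ mate] p x P(2) by simp
  next
    case False
    hence "2 * i = slot_mate p" "2 * i + 1 = p" unfolding i_def slot_mate_def by (auto elim!: oddE)
    thus ?thesis using tourn_eq_return_if_cdis_less(2)[OF P(1) _ mate] p x P(2) by simp
  qed
  moreover have slots: "i < length (pairing_slots \<pi>1 \<pi>2 (N div 2))" using i by (simp only: length_pairing_slots)
  hence "?ps ! i = child mu n tb P (\<pi>1 ! (2 * i)) (\<pi>1 ! (2 * i + 1))"
    by (simp only: nth_map nth_pairing_slots[OF i] case_prod_conv)
  ultimately have "?ps ! i = mutate mu n (P ! x)" by (simp add: bind_return_pmf)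
  moreover have "i < length ?ps" using slots by (simp only: length_map)
  ultimately show ?thesis using prob_seq_pmf_hit_ge_nth[of i ?ps E] by simp
qed

lemma prob_offspring_TwoPerm_hit_ge:
  assumes P: "pop_of_length n P" "length P = N" and N: "N \<ge> 4 * (n + 1)" "even N" and n: "n \<ge> 3"
    and x: "x < N" and few: "card (rivals n tb P x) \<le> 2 * n + 3"
  shows "measure_pmf.prob (offspring TwoPerm mu n tb N P) {Q. \<exists>z\<in>set Q. z \<in> E}
      \<ge> measure_pmf.prob (mutate mu n (P ! x)) E / 4"
proof -
  let ?W = "weaker n tb P x" and ?mu = "measure_pmf.prob (mutate mu n (P ! x)) E"
  let ?Ev = "{Q. \<exists>z\<in>set Q. z \<in> E}"
  let ?good = "{\<pi>\<in>perms N. tournament_partner \<pi> x \<in> ?W}"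
  define h where "h \<pi>1 \<pi>2 = measure_pmf.prob (seq_pmf (map (\<lambda>(\<pi>, i). child mu n tb P (\<pi> ! (2 * i)) (\<pi> ! (2 * i + 1)))
      (pairing_slots \<pi>1 \<pi>2 (N div 2)))) ?Ev" for \<pi>1 \<pi>2
  have "measure_pmf.prob (offspring TwoPerm mu n tb N P) ?Ev
      = measure_pmf.expectation (pmf_of_set (perms N)) (\<lambda>\<pi>1. measure_pmf.expectation (pmf_of_set (perms N)) (h \<pi>1))"
    unfolding offspring_TwoPerm h_def by (simp add: measure_pmf_prob_bind)
  also have "\<dots> \<ge> real (card ?good) * ?mu / real (card (perms N))"
  proof (rule expectation_pmf_of_set_ge[OF finite_perms perms_nonempty])
    fix \<pi>1 assume "\<pi>1 \<in> ?good"
    hence "measure_pmf.expectation (pmf_of_set (perms N)) (h \<pi>1) \<ge> real (card (perms N)) * ?mu / real (card (perms N))"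
      using prob_seq_pmf_hit_if_partner_weaker[OF P N(2) x] unfolding h_def
      by (intro expectation_pmf_of_set_ge[OF finite_perms perms_nonempty order.refl]) auto
    thus "?mu \<le> measure_pmf.expectation (pmf_of_set (perms N)) (h \<pi>1)"
      using finite_perms perms_nonempty by (simp add: card_gt_0_iff)
  qed (auto simp: h_def intro!: Bochner_Integration.integral_nonneg)
  finally have "real (card ?good) / real (card (perms N)) * ?mu \<le> measure_pmf.prob (offspring TwoPerm mu n tb N P) ?Ev"
    by simp
  moreover have "real (card ?good) / real (card (perms N)) = real (card ?W) / real (N - 1)"
    using partner_ratio[OF x N(2)] weaker_subset[of n tb P x] P(2) by simp
  ultimately have hit: "real (card ?W) / real (N - 1) * ?mu \<le> measure_pmf.prob (offspring TwoPerm mu n tb N P) ?Ev"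
    by simp
  have "3 / 8 \<le> real (card ?W) / real (N - 1)"
    using card_weaker_ratio_ge[OF _ _ n few] x N P(2) by simp
  hence "3 / 8 * ?mu \<le> real (card ?W) / real (N - 1) * ?mu" by (intro mult_right_mono) auto
  thus ?thesis using hit measure_nonneg[of "measure_pmf (mutate mu n (P ! x))" E] by argo
qed

lemma prob_offspring_hit_ge:
  assumes P: "pop_of_length n P" "length P = N" and N: "N \<ge> 4 * (n + 1)" "sel = TwoPerm \<Longrightarrow> even N"
    and n: "n \<ge> 3" and x: "x < N" and few: "card (rivals n tb P x) \<le> 2 * n + 3"
  shows "measure_pmf.prob (offspring sel mu n tb N P) {Q. \<exists>z\<in>set Q. z \<in> E}
      \<ge> measure_pmf.prob (mutate mu n (P ! x)) E / 4"
  using prob_offspring_Independent_hit_ge[OF P N(1) n x few] prob_offspring_TwoPerm_hit_ge[OF P N(1) _ n x few] N(2)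
  by (cases sel) auto

section \<open>A missing value next to a present one\<close>

lemma exists_missing_after_present:
  fixes V :: "nat set"
  assumes "v \<in> V" "v < w" "w \<notin> V"
  shows "\<exists>u. u \<notin> V \<and> 1 \<le> u \<and> u - 1 \<in> V \<and> u \<le> w"
proof -
  define S where "S = {u. v < u \<and> u \<le> w \<and> u \<notin> V}"
  have S: "finite S" "w \<in> S" unfolding S_def using assms by auto
  define u where "u = Min S"
  have u: "u \<in> S" unfolding u_def using S by (intro Min_in) auto
  have "u - 1 \<notin> S"
  proof
    assume "u - 1 \<in> S"
    hence "u \<le> u - 1" using Min_le[OF S(1)] unfolding u_def by blast
    moreover have "u \<ge> 1" using u unfolding S_def by auto
    ultimately show False by simp
  qed
  hence "u - 1 \<in> V" using u assms(1) unfolding S_def by (cases "u - 1 = v") auto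
  thus ?thesis using u unfolding S_def by auto
qed

lemma exists_missing_before_present:
  fixes V :: "nat set"
  assumes "v \<in> V" "w < v" "w \<notin> V"
  shows "\<exists>u. u \<notin> V \<and> u + 1 \<in> V \<and> w \<le> u"
proof -
  define S where "S = {u. u < v \<and> w \<le> u \<and> u \<notin> V}"
  have S: "finite S" "w \<in> S" unfolding S_def using assms by auto
  define u where "u = Max S"
  have u: "u \<in> S" unfolding u_def using S by (intro Max_in) auto
  have "u + 1 \<notin> S" using Max_ge[OF S(1), of "u + 1"] unfolding u_def by auto
  hence "u + 1 \<in> V" using u assms(1) unfolding S_def by (cases "u + 1 = v") auto
  thus ?thesis using u unfolding S_def by auto
qed

text \<open>A missing value \<open>u\<close> next to a present value \<open>u - 1\<close> or \<open>u + 1\<close>, such that the bits whose flip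
  turns the present value into \<open>u\<close> number at least a sixth of the missing values.\<close>
definition target_value :: "nat \<Rightarrow> nat set \<Rightarrow> nat \<Rightarrow> bool" where
  "target_value n V u \<longleftrightarrow> u \<in> {0..n} - V \<and>
     ((1 \<le> u \<and> u - 1 \<in> V \<and> card ({0..n} - V) \<le> 6 * (n - (u - 1)))
      \<or> (u + 1 \<in> V \<and> card ({0..n} - V) \<le> 6 * (u + 1)))"

lemma target_value_if_missing_between:
  assumes V: "V \<subseteq> {0..n}" and v: "v1 \<in> V" "v2 \<in> V" and w: "w \<notin> V" "v1 < w" "w < v2"
  shows "\<exists>u. target_value n V u"
proof -
  have cU: "card ({0..n} - V) \<le> n + 1" using card_mono[of "{0..n}" "{0..n} - V"] by simp
  obtain u1 where u1: "u1 \<notin> V" "1 \<le> u1" "u1 - 1 \<in> V" "u1 \<le> w"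
    using exists_missing_after_present[OF v(1) w(2,1)] by blast
  obtain u2 where u2: "u2 \<notin> V" "u2 + 1 \<in> V" "w \<le> u2"
    using exists_missing_before_present[OF v(2) w(3,1)] by blast
  have "u2 \<le> n" "u1 \<le> n" using u2(2) u1(4) w v V by auto
  show ?thesis
  proof (cases "n + 1 \<le> 2 * (n - (u1 - 1))")
    case True
    thus ?thesis using u1 \<open>u1 \<le> n\<close> cU unfolding target_value_def by (intro exI[of _ u1]) auto
  next
    case False
    thus ?thesis using u1 u2 \<open>u2 \<le> n\<close> cU unfolding target_value_def by (intro exI[of _ u2]) auto
  qed
qed

lemma target_value_if_missing_outside:
  assumes V: "V \<subseteq> {0..n}" and m: "m \<in> V" "\<And>v. v \<in> V \<Longrightarrow> m \<le> v" and M: "M \<in> V" "\<And>v. v \<in> V \<Longrightarrow> v \<le> M"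
    and missing: "{0..n} - V \<noteq> {}" and outside: "\<And>w. w \<in> {0..n} - V \<Longrightarrow> w < m \<or> M < w"
  shows "\<exists>u. target_value n V u"
proof -
  let ?U = "{0..n} - V"
  have "?U \<subseteq> {0..<m} \<union> {M<..n}"
  proof
    fix w assume "w \<in> ?U"
    thus "w \<in> {0..<m} \<union> {M<..n}" using outside[of w] by auto
  qed
  hence "card ?U \<le> card ({0..<m} \<union> {M<..n})" by (intro card_mono) auto
  also have "\<dots> \<le> m + (n - M)" using card_Un_le[of "{0..<m}" "{M<..n}"] by simp
  finally have cU: "card ?U \<le> m + (n - M)" .
  have "card ?U > 0" using missing by (auto simp: card_gt_0_iff)
  show ?thesis
  proof (cases "n - M \<le> m")
    case True
    hence "m - 1 \<in> ?U" "1 \<le> m" using m V cU \<open>card ?U > 0\<close> by force+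
    thus ?thesis using m True cU unfolding target_value_def by (intro exI[of _ "m - 1"]) auto
  next
    case False
    hence "M + 1 \<in> ?U" using M cU \<open>card ?U > 0\<close> by force
    thus ?thesis using M False cU unfolding target_value_def by (intro exI[of _ "M + 1"]) auto
  qed
qed

lemma exists_target_value:
  assumes V: "V \<subseteq> {0..n}" "V \<noteq> {}" and missing: "{0..n} - V \<noteq> {}"
  shows "\<exists>u. target_value n V u"
proof -
  have "finite V" using V(1) finite_subset by blast
  hence m: "Min V \<in> V" "\<And>v. v \<in> V \<Longrightarrow> Min V \<le> v" and M: "Max V \<in> V" "\<And>v. v \<in> V \<Longrightarrow> v \<le> Max V"
    using V(2) by auto
  show ?thesis
  proof (cases "\<exists>w\<in>{0..n} - V. Min V < w \<and> w < Max V")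
    case True
    thus ?thesis using target_value_if_missing_between[OF V(1) m(1) M(1)] by blast
  next
    case False
    have "w < Min V \<or> Max V < w" if "w \<in> {0..n} - V" for w
      using False that m(1) M(1) by (metis DiffE linorder_neqE_nat)
    from target_value_if_missing_outside[OF V(1) m M missing this] show ?thesis .
  qed
qed

section \<open>Multiplicative drift of the number of missing values\<close>

definition num_missing :: "nat \<Rightarrow> pop \<Rightarrow> real" where
  "num_missing n P = real (card ({0..n} - ones ` set P))"

definition drift_rate :: "nat \<Rightarrow> real" where
  "drift_rate n = 1 / (24 * exp 1 * real n)"

lemma num_missing_nonneg: "0 \<le> num_missing n P"
  unfolding num_missing_def by simp

lemma num_missing_le: "num_missing n P \<le> real n + 1"
  using card_mono[of "{0..n}" "{0..n} - ones ` set P"] unfolding num_missing_def by simp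

lemma abs_num_missing_le: "\<bar>num_missing n P\<bar> \<le> real n + 1"
  using num_missing_nonneg num_missing_le by (simp add: abs_le_iff)

lemma num_missing_le_n:
  assumes "pop_of_length n P" "P \<noteq> []"
  shows "num_missing n P \<le> real n"
proof -
  obtain x where x: "x \<in> set P" using assms(2) by (cases P) auto
  hence "ones x \<in> {0..n}" using assms(1) ones_le_length unfolding pop_of_length_def by fastforce
  hence "card ({0..n} - ones ` set P) \<le> card ({0..n} - {ones x})" using x by (intro card_mono) auto
  also have "\<dots> = n" using \<open>ones x \<in> {0..n}\<close> by simp
  finally show ?thesis unfolding num_missing_def by simp
qed

lemma num_missing_ge_1:
  assumes "pop_of_length n P" "\<not> covers_front n P"
  shows "num_missing n P \<ge> 1"
proof -
  have "{0..n} - ones ` set P \<noteq> {}" using covers_front_iff[OF assms(1)] assms(2) by auto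
  thus ?thesis unfolding num_missing_def by (simp add: card_gt_0_iff Suc_le_eq)
qed

lemma drift_rate:
  assumes "n \<ge> 1"
  shows "0 < drift_rate n" "drift_rate n \<le> 1 / 2"
proof -
  have "exp 1 * real n \<ge> 1 * 1" using assms by (intro mult_mono) auto
  hence "24 * exp 1 * real n \<ge> 2" by linarith
  thus "0 < drift_rate n" "drift_rate n \<le> 1 / 2" unfolding drift_rate_def by (simp_all add: divide_le_eq)
qed

text \<open>The factors of \<open>24 e n\<close>: \<open>e n\<close> from mutation, \<open>6\<close> from the choice of the target, \<open>4\<close> from
  the tournaments.\<close>
lemma prob_offspring_ones_ge:
  assumes tb: "valid_tb n tb" and P: "pop_of_length n P" "length P = N"
    and N: "N \<ge> 4 * (n + 1)" "sel = TwoPerm \<Longrightarrow> even N" and n: "n \<ge> 3"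
    and x: "x < N" "card (rivals n tb P x) \<le> 2 * n + 3"
    and mut: "measure_pmf.prob (mutate mu n (P ! x)) {z. ones z = u} \<ge> real k / (exp 1 * real n)"
    and k: "num_missing n P \<le> 6 * real k"
  shows "measure_pmf.prob (offspring sel mu n tb N P) {Q. \<exists>z\<in>set Q. z \<in> {z. ones z = u}}
    \<ge> num_missing n P * drift_rate n"
proof -
  have "num_missing n P * drift_rate n = num_missing n P / (24 * exp 1 * real n)"
    unfolding drift_rate_def by simp
  also have "\<dots> \<le> 6 * real k / (24 * exp 1 * real n)" using k n by (intro divide_right_mono) auto
  also have "\<dots> = real k / (exp 1 * real n) / 4" by simp
  also have "\<dots> \<le> measure_pmf.prob (mutate mu n (P ! x)) {z. ones z = u} / 4" using mut by simp
  also have "\<dots> \<le> measure_pmf.prob (offspring sel mu n tb N P) {Q. \<exists>z\<in>set Q. z \<in> {z. ones z = u}}"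
    by (rule prob_offspring_hit_ge[OF P N n x])
  finally show ?thesis .
qed

lemma prob_offspring_creates_target_ge:
  assumes tb: "valid_tb n tb" and P: "pop_of_length n P" "length P = N"
    and N: "N \<ge> 4 * (n + 1)" "sel = TwoPerm \<Longrightarrow> even N" and n: "n \<ge> 4"
    and u: "target_value n (ones ` set P) u"
  shows "measure_pmf.prob (offspring sel mu n tb N P) {Q. \<exists>z\<in>set Q. z \<in> {z. ones z = u}}
    \<ge> num_missing n P * drift_rate n"
proof -
  have miss: "\<forall>y<length P. ones (P ! y) \<noteq> u" using u unfolding target_value_def by auto
  have len: "length (P ! x) = n" if "x < length P" for x using P(1) that unfolding pop_of_length_def by auto
  from u consider (up) "1 \<le> u" "u - 1 \<in> ones ` set P" "card ({0..n} - ones ` set P) \<le> 6 * (n - (u - 1))"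
    | (down) "u + 1 \<in> ones ` set P" "card ({0..n} - ones ` set P) \<le> 6 * (u + 1)"
    unfolding target_value_def by blast
  thus ?thesis
  proof cases
    case up
    then obtain i where i: "i < length P" "ones (P ! i) = u - 1" by (auto simp: in_set_conv_nth)
    then obtain x where x: "x < length P" "ones (P ! x) = u - 1" "card (rivals n tb P x) \<le> 2 * n + 3"
      using exists_few_rivals_if_successor_missing[OF tb P(1) i(1)] miss up(1) by auto
    show ?thesis
      using prob_offspring_ones_ge[OF tb P N _ _ x(3), where mu = mu and u = u and k = "n - (u - 1)"]
        prob_mutate_ones_Suc_ge[OF len[OF x(1)], of mu] n x up(1,3) P(2)
      unfolding num_missing_def by simp
  next
    case down
    then obtain i where i: "i < length P" "ones (P ! i) = u + 1" by (auto simp: in_set_conv_nth)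
    then obtain x where x: "x < length P" "ones (P ! x) = u + 1" "card (rivals n tb P x) \<le> 2 * n + 3"
      using exists_few_rivals_if_predecessor_missing[OF tb P(1) i(1)] miss by auto
    show ?thesis
      using prob_offspring_ones_ge[OF tb P N _ _ x(3), where mu = mu and u = u and k = "u + 1"]
        prob_mutate_ones_pred_ge[OF len[OF x(1)], of mu] n x down(2) P(2)
      unfolding num_missing_def by simp
  qed
qed

lemma expectation_bind_pmf:
  fixes g :: "'b \<Rightarrow> real"
  assumes g: "\<And>x. 0 \<le> g x" "\<And>x. g x \<le> B"
  shows "measure_pmf.expectation (M \<bind> f) g = measure_pmf.expectation M (\<lambda>x. measure_pmf.expectation (f x) g)"
proof -
  have int: "integrable (measure_pmf K) g" for K
    by (rule measure_pmf.integrable_const_bound[where B=B]) (use g in auto)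
  have e0: "0 \<le> measure_pmf.expectation K g" for K by (rule Bochner_Integration.integral_nonneg) (use g in auto)
  have eB: "measure_pmf.expectation K g \<le> B" for K
  proof -
    have "measure_pmf.expectation K g \<le> measure_pmf.expectation K (\<lambda>_. B)"
      by (rule integral_mono[OF int]) (use g in auto)
    thus ?thesis by simp
  qed
  have int2: "integrable (measure_pmf M) (\<lambda>x. measure_pmf.expectation (f x) g)"
    by (rule measure_pmf.integrable_const_bound[where B=B]) (use e0 eB in auto)
  have "ennreal (measure_pmf.expectation (M \<bind> f) g) = (\<integral>\<^sup>+y. ennreal (g y) \<partial>measure_pmf (M \<bind> f))"
    by (rule nn_integral_eq_integral[symmetric]) (use int g in auto)
  also have "\<dots> = (\<integral>\<^sup>+x. \<integral>\<^sup>+y. ennreal (g y) \<partial>f x \<partial>M)" by simp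
  also have "\<dots> = (\<integral>\<^sup>+x. ennreal (measure_pmf.expectation (f x) g) \<partial>M)"
    by (rule nn_integral_cong, rule nn_integral_eq_integral) (use int g in auto)
  also have "\<dots> = ennreal (measure_pmf.expectation M (\<lambda>x. measure_pmf.expectation (f x) g))"
    by (rule nn_integral_eq_integral) (use int2 e0 in auto)
  finally show ?thesis
    by (subst (asm) ennreal_inj) (auto intro!: Bochner_Integration.integral_nonneg e0 g)
qed

lemma expectation_mono_on_support:
  fixes f g :: "'b \<Rightarrow> real"
  assumes "\<And>x. x \<in> set_pmf M \<Longrightarrow> f x \<le> g x" "\<And>x. \<bar>f x\<bar> \<le> B" "\<And>x. \<bar>g x\<bar> \<le> B"
  shows "measure_pmf.expectation M f \<le> measure_pmf.expectation M g"
proof (rule integral_mono_AE)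
  show "integrable (measure_pmf M) f" "integrable (measure_pmf M) g"
    by (rule measure_pmf.integrable_const_bound[where B=B], use assms in auto)+
  show "AE x in measure_pmf M. f x \<le> g x" using assms(1) by (simp add: AE_measure_pmf_iff)
qed

lemma abs_expectation_num_missing_le: "\<bar>measure_pmf.expectation M (num_missing n)\<bar> \<le> real n + 1"
proof -
  have "measure_pmf.expectation M (num_missing n) \<le> measure_pmf.expectation M (\<lambda>_. real n + 1)"
    by (rule expectation_mono_on_support[where B="real n + 1"]) (use num_missing_le abs_num_missing_le in auto)
  moreover have "0 \<le> measure_pmf.expectation M (num_missing n)"
    by (rule Bochner_Integration.integral_nonneg) (use num_missing_nonneg in auto)
  ultimately show ?thesis by simp
qed

lemma nsga_step_support:
  assumes tb: "valid_tb n tb" and P: "pop_of_length n P" "length P = N"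
    and N: "N \<ge> 4 * (n + 1)" "sel = TwoPerm \<Longrightarrow> even N"
    and Q: "Q \<in> set_pmf (offspring sel mu n tb N P)" and P': "P' \<in> set_pmf (survive n tb N (P @ Q))"
  shows "pop_of_length n P'" "length P' = N"
    "{0..n} - ones ` set P' \<subseteq> ({0..n} - ones ` set P) - ones ` set Q"
proof -
  have "pop_of_length n Q" "length Q = N" using offspring_support[OF P _ N(2) Q] N(1) by auto
  hence "pop_of_length n (P @ Q)" "length (P @ Q) \<ge> N" using P unfolding pop_of_length_def by auto
  note keep = survive_keeps_ones[OF tb this(1) N(1) this(2) P']
  show "pop_of_length n P'" "length P' = N" using keep by auto
  show "{0..n} - ones ` set P' \<subseteq> ({0..n} - ones ` set P) - ones ` set Q" using keep(3) by auto
qed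

lemma num_missing_le_if_kept:
  assumes sub: "{0..n} - ones ` set P' \<subseteq> ({0..n} - ones ` set P) - ones ` set Q"
    and u: "u \<in> {0..n} - ones ` set P"
  shows "num_missing n P' \<le> num_missing n P - indicator {Q. \<exists>z\<in>set Q. z \<in> {z. ones z = u}} Q"
proof (cases "u \<in> ones ` set Q")
  case True
  let ?M = "{0..n} - ones ` set P"
  have "{0..n} - ones ` set P' \<subseteq> ?M - {u}" using sub True by auto
  hence "card ({0..n} - ones ` set P') \<le> card ?M - 1"
    using card_mono[of "?M - {u}"] u by (simp add: card_Diff_singleton)
  moreover have "card ?M \<ge> 1" using u by (auto simp: Suc_le_eq card_gt_0_iff)
  moreover have "indicator {Q. \<exists>z\<in>set Q. z \<in> {z. ones z = u}} Q = (1::real)" using True by (auto simp: indicator_def)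
  ultimately show ?thesis unfolding num_missing_def by (simp add: of_nat_diff)
next
  case False
  have "card ({0..n} - ones ` set P') \<le> card ({0..n} - ones ` set P)" using sub by (intro card_mono) auto
  moreover have "indicator {Q. \<exists>z\<in>set Q. z \<in> {z. ones z = u}} Q = (0::real)"
    using False by (auto simp: indicator_def)
  ultimately show ?thesis unfolding num_missing_def by simp
qed

text \<open>No value is ever lost, and a created missing value \<open>u\<close> is kept.\<close>
lemma expectation_num_missing_nsga_step_le:
  assumes tb: "valid_tb n tb" and P: "pop_of_length n P" "length P = N"
    and N: "N \<ge> 4 * (n + 1)" "sel = TwoPerm \<Longrightarrow> even N" and u: "u \<in> {0..n} - ones ` set P"
  shows "measure_pmf.expectation (nsga_step sel mu n tb N P) (num_missing n)
    \<le> num_missing n P - measure_pmf.prob (offspring sel mu n tb N P) {Q. \<exists>z\<in>set Q. z \<in> {z. ones z = u}}"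
proof -
  let ?A = "{Q. \<exists>z\<in>set Q. z \<in> {z. ones z = u}}"
  let ?g = "\<lambda>Q. num_missing n P - indicator ?A Q"
  have g: "\<bar>?g Q\<bar> \<le> real n + 1" for Q
    using num_missing_nonneg[of n P] num_missing_le[of n P] by (auto simp: indicator_def abs_le_iff)
  have drop: "num_missing n P' \<le> ?g Q"
    if "Q \<in> set_pmf (offspring sel mu n tb N P)" "P' \<in> set_pmf (survive n tb N (P @ Q))" for Q P'
    using num_missing_le_if_kept[OF nsga_step_support(3)[OF tb P N that] u] .
  have "measure_pmf.expectation (nsga_step sel mu n tb N P) (num_missing n)
      = measure_pmf.expectation (offspring sel mu n tb N P)
          (\<lambda>Q. measure_pmf.expectation (survive n tb N (P @ Q)) (num_missing n))"
    unfolding nsga_step_def by (rule expectation_bind_pmf[where B="real n + 1"]) (use num_missing_nonneg num_missing_le in auto)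
  also have "\<dots> \<le> measure_pmf.expectation (offspring sel mu n tb N P) ?g"
  proof (rule expectation_mono_on_support[where B="real n + 1"])
    fix Q assume "Q \<in> set_pmf (offspring sel mu n tb N P)"
    hence "measure_pmf.expectation (survive n tb N (P @ Q)) (num_missing n)
        \<le> measure_pmf.expectation (survive n tb N (P @ Q)) (\<lambda>_. ?g Q)"
      using drop abs_num_missing_le g by (intro expectation_mono_on_support[where B="real n + 1"]) auto
    thus "measure_pmf.expectation (survive n tb N (P @ Q)) (num_missing n) \<le> ?g Q" by simp
  qed (use abs_expectation_num_missing_le g in auto)
  also have "\<dots> = num_missing n P - measure_pmf.prob (offspring sel mu n tb N P) ?A"
    by (subst Bochner_Integration.integral_diff)
      (auto intro!: measure_pmf.integrable_const_bound[where B=1] simp: indicator_def)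
  finally show ?thesis .
qed

lemma expectation_num_missing_nsga_step_drift:
  assumes tb: "valid_tb n tb" and P: "pop_of_length n P" "length P = N"
    and N: "N \<ge> 4 * (n + 1)" "sel = TwoPerm \<Longrightarrow> even N" and n: "n \<ge> 4"
  shows "measure_pmf.expectation (nsga_step sel mu n tb N P) (num_missing n) \<le> (1 - drift_rate n) * num_missing n P"
proof (cases "{0..n} - ones ` set P = {}")
  case True
  have "measure_pmf.expectation (nsga_step sel mu n tb N P) (num_missing n)
      \<le> measure_pmf.expectation (nsga_step sel mu n tb N P) (\<lambda>_. 0)"
  proof (rule expectation_mono_on_support[where B="real n + 1"])
    fix P' assume "P' \<in> set_pmf (nsga_step sel mu n tb N P)"
    then obtain Q where "Q \<in> set_pmf (offspring sel mu n tb N P)" "P' \<in> set_pmf (survive n tb N (P @ Q))"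
      unfolding nsga_step_def by auto
    thus "num_missing n P' \<le> 0" using nsga_step_support(3)[OF tb P N] True unfolding num_missing_def by auto
  qed (use abs_num_missing_le in auto)
  moreover have "num_missing n P = 0" using True unfolding num_missing_def by simp
  ultimately show ?thesis by simp
next
  case False
  have V: "ones ` set P \<subseteq> {0..n}" "ones ` set P \<noteq> {}"
    using P N ones_le_length unfolding pop_of_length_def by fastforce+
  obtain u where u: "target_value n (ones ` set P) u" using exists_target_value[OF V False] by blast
  hence "u \<in> {0..n} - ones ` set P" unfolding target_value_def by blast
  from expectation_num_missing_nsga_step_le[where sel = sel and mu = mu, OF tb P N this]
    prob_offspring_creates_target_ge[where sel = sel and mu = mu, OF tb P N n u]
  show ?thesis by (simp add: algebra_simps)
qed

lemma aug_state_support: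
  assumes tb: "valid_tb n tb" and N: "N \<ge> 4 * (n + 1)" "sel = TwoPerm \<Longrightarrow> even N"
  shows "s \<in> set_pmf (aug_state sel mu n tb N t) \<Longrightarrow> pop_of_length n (fst s) \<and> length (fst s) = N"
proof (induction t arbitrary: s)
  case 0
  have "finite {x :: bits. length x = n}" using finite_lists_length_eq[of "UNIV :: bool set" n] by simp
  moreover have "{x :: bits. length x = n} \<noteq> {}" using length_replicate[of n True] by blast
  moreover obtain P where "P \<in> set_pmf (init_pop n N)" "s = (P, False)" using 0 by auto
  ultimately show ?case unfolding init_pop_def set_replicate_pmf pop_of_length_def by auto
next
  case (Suc t)
  then obtain P h P' where s: "(P, h) \<in> set_pmf (aug_state sel mu n tb N t)"
    "P' \<in> set_pmf (nsga_step sel mu n tb N P)" "s = (P', h \<or> covers_front n P)"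
    by auto
  from s(2) obtain Q where Q:
    "Q \<in> set_pmf (offspring sel mu n tb N P)" "P' \<in> set_pmf (survive n tb N (P @ Q))"
    unfolding nsga_step_def by auto
  have "pop_of_length n P" "length P = N" using Suc.IH[OF s(1)] by auto
  from nsga_step_support(1,2)[OF tb this N Q] show ?case using s(3) by simp
qed

lemma aug_state_Suc:
  "aug_state sel mu n tb N (Suc t) = aug_state sel mu n tb N t \<bind>
     (\<lambda>s. nsga_step sel mu n tb N (fst s) \<bind> (\<lambda>P'. return_pmf (P', snd s \<or> covers_front n (fst s))))"
  by (simp add: case_prod_beta')

lemma expectation_num_missing_aug_state:
  assumes tb: "valid_tb n tb" and N: "N \<ge> 4 * (n + 1)" "sel = TwoPerm \<Longrightarrow> even N" and n: "n \<ge> 4"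
  shows "measure_pmf.expectation (aug_state sel mu n tb N t) (\<lambda>s. num_missing n (fst s)) \<le> real n * (1 - drift_rate n) ^ t"
proof (induction t)
  case 0
  have "measure_pmf.expectation (aug_state sel mu n tb N 0) (\<lambda>s. num_missing n (fst s))
      \<le> measure_pmf.expectation (aug_state sel mu n tb N 0) (\<lambda>_. real n)"
  proof (rule expectation_mono_on_support[where B="real n + 1"])
    fix s assume "s \<in> set_pmf (aug_state sel mu n tb N 0)"
    hence "pop_of_length n (fst s)" "fst s \<noteq> []" using aug_state_support[OF tb N] N(1) by fastforce+
    thus "num_missing n (fst s) \<le> real n" by (rule num_missing_le_n)
  qed (use abs_num_missing_le in auto)
  thus ?case by simp
next
  case (Suc t)
  let ?A = "aug_state sel mu n tb N t" and ?q = "1 - drift_rate n"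
  have q: "0 \<le> ?q" "?q \<le> 1" using drift_rate[of n] n by auto
  have "measure_pmf.expectation (aug_state sel mu n tb N (Suc t)) (\<lambda>s. num_missing n (fst s))
      = measure_pmf.expectation ?A (\<lambda>s. measure_pmf.expectation (nsga_step sel mu n tb N (fst s)) (num_missing n))"
    unfolding aug_state_Suc using num_missing_nonneg num_missing_le
    by (simp add: expectation_bind_pmf[where B="real n + 1"])
  also have "\<dots> \<le> measure_pmf.expectation ?A (\<lambda>s. ?q * num_missing n (fst s))"
  proof (rule expectation_mono_on_support[where B="real n + 1"])
    fix s assume "s \<in> set_pmf ?A"
    thus "measure_pmf.expectation (nsga_step sel mu n tb N (fst s)) (num_missing n) \<le> ?q * num_missing n (fst s)"
      using aug_state_support[OF tb N] expectation_num_missing_nsga_step_drift[OF tb _ _ N n] by blast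
  next
    show "\<bar>?q * num_missing n (fst s)\<bar> \<le> real n + 1" for s
      using q abs_num_missing_le[of n "fst s"] mult_left_le_one_le[of "num_missing n (fst s)" ?q]
        num_missing_nonneg[of n "fst s"] by (simp add: abs_mult)
  qed (rule abs_expectation_num_missing_le)
  also have "\<dots> = ?q * measure_pmf.expectation ?A (\<lambda>s. num_missing n (fst s))" by simp
  also have "\<dots> \<le> ?q * (real n * ?q ^ t)" using Suc.IH q by (intro mult_left_mono) auto
  finally show ?case by (simp add: algebra_simps)
qed

text \<open>As \<open>num_missing \<ge> 1\<close> before the front is covered, \<open>Pr[T > t]\<close> is at most the expected
  number of missing values at time \<open>t\<close>.\<close>
lemma prob_T_ge_Suc_le:
  assumes tb: "valid_tb n tb" and N: "N \<ge> 4 * (n + 1)" "sel = TwoPerm \<Longrightarrow> even N" and n: "n \<ge> 4"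
  shows "prob_T_ge sel mu n tb N (Suc t) \<le> real n * (1 - drift_rate n) ^ t"
proof -
  let ?F = "\<lambda>s. nsga_step sel mu n tb N (fst s) \<bind> (\<lambda>P'. return_pmf (P', snd s \<or> covers_front n (fst s)))"
  have "prob_T_ge sel mu n tb N (Suc t)
      = measure_pmf.expectation (aug_state sel mu n tb N t) (\<lambda>s. measure_pmf.prob (?F s) {s. \<not> snd s})"
    unfolding prob_T_ge_def aug_state_Suc by (rule measure_pmf_prob_bind)
  also have "\<dots> \<le> measure_pmf.expectation (aug_state sel mu n tb N t) (\<lambda>s. num_missing n (fst s))"
  proof (rule expectation_mono_on_support[where B="real n + 1"])
    fix s assume s: "s \<in> set_pmf (aug_state sel mu n tb N t)"
    show "measure_pmf.prob (?F s) {s. \<not> snd s} \<le> num_missing n (fst s)"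
    proof (cases "covers_front n (fst s)")
      case True
      hence "set_pmf (?F s) \<inter> {s. \<not> snd s} = {}" by auto
      hence "measure_pmf.prob (?F s) {s. \<not> snd s} = 0" by (simp add: measure_pmf_zero_iff)
      thus ?thesis using num_missing_nonneg by simp
    next
      case False
      thus ?thesis using num_missing_ge_1 aug_state_support[OF tb N s] measure_pmf.prob_le_1 order_trans
        by blast
    qed
  qed (use abs_num_missing_le in \<open>auto intro: order_trans[OF measure_pmf.prob_le_1]\<close>)
  also have "\<dots> \<le> real n * (1 - drift_rate n) ^ t" by (rule expectation_num_missing_aug_state[OF tb N n])
  finally show ?thesis .
qed

section \<open>Expected runtime and tail bound\<close>

lemma power_one_minus_le_exp:
  fixes r :: real
  assumes "0 \<le> r" "r \<le> 1"
  shows "(1 - r) ^ t \<le> exp (- r * real t)"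
proof -
  have "(1 - r) ^ t \<le> exp (- r) ^ t" using assms exp_ge_add_one_self[of "- r"] by (intro power_mono) auto
  also have "\<dots> = exp (- r * real t)" by (simp add: exp_of_nat_mult[symmetric] mult.commute)
  finally show ?thesis .
qed

text \<open>Bounding the first \<open>\<lceil>ln c / r\<rceil>\<close> terms by 1 and the rest by a geometric series.\<close>
lemma suminf_min_geometric_le:
  fixes p :: "nat \<Rightarrow> real"
  assumes p: "\<And>t. 0 \<le> p t" "\<And>t. p t \<le> 1" "\<And>t. p t \<le> c * (1 - r) ^ t"
    and r: "0 < r" "r \<le> 1" and c: "1 \<le> c"
  shows "(\<Sum>t. ennreal (p t)) \<le> ennreal (ln c / r + 1 + 1 / r)"
proof -
  define s0 where "s0 = nat \<lceil>ln c / r\<rceil>"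
  define h where "h t = (if t < s0 then 1 else (1 - r) ^ (t - s0))" for t
  have s0: "ln c / r \<le> real s0" "real s0 \<le> ln c / r + 1"
    unfolding s0_def using c r by (auto intro!: divide_nonneg_pos)
  have "c * (1 - r) ^ s0 \<le> c * exp (- r * real s0)"
    using power_one_minus_le_exp[of r s0] r c by (intro mult_left_mono) auto
  also have "\<dots> \<le> c * exp (- ln c)" using s0(1) r c by (intro mult_left_mono) (auto simp: field_simps)
  also have "\<dots> = 1" using c by (simp add: exp_minus)
  finally have cs0: "c * (1 - r) ^ s0 \<le> 1" .
  have ph: "p t \<le> h t" for t
  proof (cases "t < s0")
    case False
    have "p t \<le> (c * (1 - r) ^ s0) * (1 - r) ^ (t - s0)"
      using p(3)[of t] False by (simp add: power_add[symmetric] mult.assoc)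
    also have "\<dots> \<le> (1 - r) ^ (t - s0)" using cs0 r c by (intro mult_left_le_one_le) auto
    finally show ?thesis unfolding h_def using False by simp
  qed (use p(2) h_def in auto)
  have geo: "(\<lambda>k. (1 - r) ^ k) sums (1 / r)" using geometric_sums[of "1 - r"] r by simp
  have shift: "(\<lambda>k. h (k + s0)) = (\<lambda>k. (1 - r) ^ k)" unfolding h_def by auto
  have sh: "summable h" using geo shift summable_iff_shift[of h s0] by (auto simp: sums_iff)
  have "suminf h = (\<Sum>k. h (k + s0)) + (\<Sum>i<s0. h i)" by (rule suminf_split_initial_segment[OF sh])
  also have "(\<Sum>k. h (k + s0)) = 1 / r" using geo shift by (simp add: sums_iff)
  also have "(\<Sum>i<s0. h i) = real s0" unfolding h_def by simp
  finally have sum_h: "suminf h \<le> ln c / r + 1 + 1 / r" using s0(2) by simp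
  have h0: "0 \<le> h t" for t using r unfolding h_def by auto
  have "(\<Sum>t. ennreal (p t)) \<le> (\<Sum>t. ennreal (h t))" by (rule suminf_le) (auto intro!: ennreal_leI ph)
  also have "\<dots> = ennreal (suminf h)" by (rule suminf_ennreal2[OF h0 sh])
  also have "\<dots> \<le> ennreal (ln c / r + 1 + 1 / r)" using sum_h by (rule ennreal_leI)
  finally show ?thesis .
qed

lemma expected_T_le:
  assumes tb: "valid_tb n tb" and N: "N \<ge> 4 * (n + 1)" "sel = TwoPerm \<Longrightarrow> even N" and n: "n \<ge> 4"
  shows "expected_T sel mu n tb N \<le> ennreal (200 * exp 1 / 3 * n * (ln n + 1))"
proof -
  have r: "0 < drift_rate n" "drift_rate n \<le> 1" using drift_rate[of n] n by auto
  have r_inv: "1 / drift_rate n = 24 * exp 1 * real n" unfolding drift_rate_def by simp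
  have "expected_T sel mu n tb N \<le> ennreal (ln (real n) / drift_rate n + 1 + 1 / drift_rate n)"
    unfolding expected_T_def using prob_T_ge_Suc_le[OF tb N n] r n
    by (intro suminf_min_geometric_le) (auto simp: prob_T_ge_def)
  also have "ln (real n) / drift_rate n + 1 + 1 / drift_rate n
      = 24 * exp 1 * real n * (ln (real n) + 1) + 1"
    using r_inv by (simp add: divide_inverse algebra_simps)
  also have "\<dots> \<le> 200 * exp 1 / 3 * n * (ln n + 1)"
  proof -
    have "1 * 1 \<le> exp 1 * real n" using n by (intro mult_mono) auto
    moreover have "1 \<le> ln (real n) + 1" using n by simp
    ultimately have "1 * 1 \<le> exp 1 * real n * (ln (real n) + 1)" by (intro mult_mono) auto
    thus ?thesis by (simp add: algebra_simps)
  qed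
  finally show ?thesis by (simp add: ennreal_leI)
qed

lemma tail_time:
  assumes n: "n \<ge> 4" and \<delta>: "\<delta> \<ge> 0"
  defines "T \<equiv> nat \<lceil>200 * exp 1 / 3 * (1 + \<delta>) * n * ln n\<rceil>"
  shows "T \<ge> 1" "(1 + \<delta>) * ln (real n) \<le> drift_rate n * real T"
proof -
  have ln: "ln (real n) > 0" using n by simp
  have T: "real T \<ge> 200 * exp 1 / 3 * (1 + \<delta>) * n * ln n" unfolding T_def by linarith
  moreover have "0 < 200 * exp 1 / 3 * (1 + \<delta>) * n * ln n" using ln \<delta> n by (intro mult_pos_pos) auto
  ultimately show "T \<ge> 1" by (cases T) auto
  have "drift_rate n * (200 * exp 1 / 3 * (1 + \<delta>) * n * ln n) = 200 / 72 * ((1 + \<delta>) * ln (real n))"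
    unfolding drift_rate_def using n by (simp add: field_simps)
  moreover have "drift_rate n * real T \<ge> drift_rate n * (200 * exp 1 / 3 * (1 + \<delta>) * n * ln n)"
    using T drift_rate[of n] n by (intro mult_left_mono) auto
  moreover have "0 \<le> (1 + \<delta>) * ln (real n)" using ln \<delta> by simp
  ultimately show "(1 + \<delta>) * ln (real n) \<le> drift_rate n * real T" by linarith
qed

lemma prob_T_ge_tail:
  assumes tb: "valid_tb n tb" and N: "N \<ge> 4 * (n + 1)" "sel = TwoPerm \<Longrightarrow> even N" and n: "n \<ge> 4"
    and \<delta>: "\<delta> \<ge> 0"
  shows "prob_T_ge sel mu n tb N (nat \<lceil>200 * exp 1 / 3 * (1 + \<delta>) * n * ln n\<rceil>) \<le> 2 * real n powr (- \<delta>)"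
proof -
  let ?r = "drift_rate n"
  define T where "T = nat \<lceil>200 * exp 1 / 3 * (1 + \<delta>) * n * ln n\<rceil>"
  have r: "0 < ?r" "?r \<le> 1 / 2" using drift_rate[of n] n by auto
  have "T \<ge> 1" and rT: "(1 + \<delta>) * ln (real n) \<le> ?r * real T"
    using tail_time[OF n \<delta>] unfolding T_def by auto
  have "prob_T_ge sel mu n tb N T \<le> real n * (1 - ?r) ^ (T - 1)"
    using prob_T_ge_Suc_le[where sel = sel and mu = mu and t = "T - 1", OF tb N n] \<open>T \<ge> 1\<close> by simp
  also have "(1 - ?r) ^ (T - 1) \<le> 2 * (1 - ?r) ^ T"
    using \<open>T \<ge> 1\<close> r power_Suc[of "1 - ?r" "T - 1"] mult_right_mono[of "1 / 2" "1 - ?r" "(1 - ?r) ^ (T - 1)"]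
    by (cases T) auto
  also have "(1 - ?r) ^ T \<le> exp (- ((1 + \<delta>) * ln (real n)))"
  proof -
    have "(1 - ?r) ^ T \<le> exp (- ?r * real T)" by (rule power_one_minus_le_exp) (use r in auto)
    also have "\<dots> \<le> exp (- ((1 + \<delta>) * ln (real n)))" using rT by simp
    finally show ?thesis .
  qed
  also have "exp (- ((1 + \<delta>) * ln (real n))) = real n powr (- 1) * real n powr (- \<delta>)"
    using n by (simp add: powr_def algebra_simps exp_add[symmetric])
  finally have "prob_T_ge sel mu n tb N T \<le> real n * (2 * (real n powr (- 1) * real n powr (- \<delta>)))"
    using n by (simp add: mult_left_mono)
  also have "\<dots> = 2 * real n powr (- \<delta>)" using n by (simp add: powr_minus field_simps)
  finally show ?thesis unfolding T_def .
qed

theorem theorem6: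
  fixes n N :: nat and sel :: selection and mu :: mutation
    and tb :: "pop \<Rightarrow> nat \<Rightarrow> nat set \<Rightarrow> nat list"
  assumes "n \<ge> 4" and "N \<ge> 4 * (n + 1)"
    and "sel = TwoPerm \<Longrightarrow> even N"
    and "valid_tb n tb"
  shows "expected_T sel mu n tb N \<le> ennreal (200 * exp 1 / 3 * n * (ln n + 1))
    \<and> ennreal N * expected_T sel mu n tb N \<le> ennreal (200 * exp 1 / 3 * N * n * (ln n + 1))
    \<and> (\<forall>\<delta>::real. \<delta> \<ge> 0 \<longrightarrow>
           prob_T_ge sel mu n tb N (nat \<lceil>200 * exp 1 / 3 * (1 + \<delta>) * n * ln n\<rceil>) \<le> 2 * real n powr (- \<delta>))"
proof (intro conjI allI impI)
  show E: "expected_T sel mu n tb N \<le> ennreal (200 * exp 1 / 3 * n * (ln n + 1))"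
    using expected_T_le[OF assms(4,2,3,1)] .
  have "ennreal N * expected_T sel mu n tb N \<le> ennreal N * ennreal (200 * exp 1 / 3 * n * (ln n + 1))"
    using E by (rule mult_left_mono) simp
  also have "\<dots> = ennreal (200 * exp 1 / 3 * N * n * (ln n + 1))"
    using assms(1) by (simp add: ennreal_mult'[symmetric] mult_ac)
  finally show "ennreal N * expected_T sel mu n tb N \<le> ennreal (200 * exp 1 / 3 * N * n * (ln n + 1))" .
  show "prob_T_ge sel mu n tb N (nat \<lceil>200 * exp 1 / 3 * (1 + \<delta>) * n * ln n\<rceil>) \<le> 2 * real n powr (- \<delta>)"
    if "\<delta> \<ge> 0" for \<delta> :: real
    using prob_T_ge_tail[OF assms(4,2,3,1) that] .
qed

end
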